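(* Let $\mathbf a$ be a weight and for $m\in\{2,3,\dots\}$ set $\Psi_{m,\mathbf a}(t)=\mathbf a(1)^t+\cdots+\mathbf a(m)^t$. (i) If $m\in\{2,3,\dots\}$, then $\mathbb T^{m,\mathbf a}$ is Ahlfors $s$-regular, where $s$ is the unique solution of $\Psi_{m,\mathbf a}(s)=1$. (ii) If there exists $s>0$ such that $\lim_{m\to\infty}\Psi_{m,\mathbf a}(s)<1$, then the Hausdorff dimension of $\mathbb T^{\infty,\mathbf a}$ is at most $s$.
   Context: An alphabet is $A=\mathbb N$ or $\{1,\dots,m\}$. $A^k$: words of length $k$ ($A^0=\{\varepsilon\}$), $A^*=\bigcup_kA^k$, $A^{\mathbb N}$: infinite words; $A^n_u$, $A^{\mathbb N}_u$: words beginning with $u\in A^*$; $w(n)$: length-$n$ prefix; $i^{(k)}$: $k$ copies of $i$. Graphs $G^A_k=(A^k,E^A_k)$: $E^A_1=\{\{1,i\}:i\in A\setminus\{1\}\}$, $E^A_{k+1}=\{\{12^{(k)},i1^{(k)}\}:i\in A\setminus\{1\}\}\cup\{\{iw,iu\}:i\in A,\{w,u\}\in E^A_k\}$. $A^{\mathbb N}_{u_1}\wedge A^{\mathbb N}_{u_2}$: the $w\in A^{\mathbb N}_{u_1}$ such that for every $n>\max\{|u_1|,|u_2|\}$ some $u\in A^n_{u_2}$ has $\{w(n),u\}\in E^A_n$, together with the symmetric set. Chain joining $w,w'$: list $A^{\mathbb N}_{v_1},\dots,A^{\mathbb N}_{v_N}$, $w\in A^{\mathbb N}_{v_1}$, $w'\in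 A^{\mathbb N}_{v_N}$, consecutive $\wedge$ nonempty. Weight: non-increasing $\mathbf a:\mathbb N\to(0,1/2]$, $\mathbf a(1)=\mathbf a(2)=1/2$, $\mathbf a(i)\to0$; $\Delta_{\mathbf a}(i_1\cdots i_k)=\prod\mathbf a(i_j)$, $\Delta_{\mathbf a}(\varepsilon)=1$. $\rho_{A,\mathbf a}(w,u)=\inf\sum_{i=1}^N\Delta_{\mathbf a}(v_i)$ over chains; $\mathbb T^{A,\mathbf a}=A^{\mathbb N}/\{\rho_{A,\mathbf a}=0\}$ with the induced metric; $\mathbb T^{m,\mathbf a}=\mathbb T^{\{1,\dots,m\},\mathbf a}$, $\mathbb T^{\infty,\mathbf a}=\mathbb T^{\mathbb N,\mathbf a}$. A metric space $X$ is Ahlfors $s$-regular if there are a measure $\mu$ on $X$ and $C>1$ with $C^{-1}r^s\le\mu(B(x,r))\le Cr^s$ for all $x\in X$ and $r\in(0,\mathrm{diam}X)$. *)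

theory Defs
  imports "HOL-Analysis.Analysis"
begin

text \<open>Letters are positive natural numbers; an alphabet is a set A of them
  ({1..m} or the whole of {1..}).\<close>

definition fwords :: "nat set \<Rightarrow> nat \<Rightarrow> nat list set" where
  "fwords A k = {w. length w = k \<and> set w \<subseteq> A}"

definition allfwords :: "nat set \<Rightarrow> nat list set" where
  "allfwords A = (\<Union>k. fwords A k)"

definition iwords :: "nat set \<Rightarrow> (nat \<Rightarrow> nat) set" where
  "iwords A = {w. \<forall>n. w n \<in> A}"

definition pref :: "(nat \<Rightarrow> nat) \<Rightarrow> nat \<Rightarrow> nat list" where
  "pref w n = map w [0..<n]"

definition fcyl :: "nat set \<Rightarrow> nat \<Rightarrow> nat list \<Rightarrow> nat list set" where
  "fcyl A n u = {v \<in> fwords A n. take (length u) v = u}"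

definition icyl :: "nat set \<Rightarrow> nat list \<Rightarrow> (nat \<Rightarrow> nat) set" where
  "icyl A u = {w \<in> iwords A. pref w (length u) = u}"

fun edges :: "nat set \<Rightarrow> nat \<Rightarrow> nat list set set" where
  "edges A 0 = {}"
| "edges A (Suc 0) = {{[1], [i]} | i. i \<in> A - {1}}"
| "edges A (Suc (Suc k)) =
     {{1 # replicate (Suc k) 2, i # replicate (Suc k) 1} | i. i \<in> A - {1}}
     \<union> {{i # w, i # u} | i w u. i \<in> A \<and> {w, u} \<in> edges A (Suc k)}"

definition wedge1 :: "nat set \<Rightarrow> nat list \<Rightarrow> nat list \<Rightarrow> (nat \<Rightarrow> nat) set" where
  "wedge1 A u1 u2 = {w \<in> icyl A u1. \<forall>n > max (length u1) (length u2).
      \<exists>u \<in> fcyl A n u2. {pref w n, u} \<in> edges A n}"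

definition wedge :: "nat set \<Rightarrow> nat list \<Rightarrow> nat list \<Rightarrow> (nat \<Rightarrow> nat) set" where
  "wedge A u1 u2 = wedge1 A u1 u2 \<union> wedge1 A u2 u1"

definition is_chain :: "nat set \<Rightarrow> (nat \<Rightarrow> nat) \<Rightarrow> (nat \<Rightarrow> nat) \<Rightarrow> nat list list \<Rightarrow> bool" where
  "is_chain A w w' vs \<longleftrightarrow> vs \<noteq> [] \<and> set vs \<subseteq> allfwords A \<and>
     w \<in> icyl A (hd vs) \<and> w' \<in> icyl A (last vs) \<and>
     (\<forall>i. Suc i < length vs \<longrightarrow> wedge A (vs ! i) (vs ! Suc i) \<noteq> {})"

definition is_weight :: "(nat \<Rightarrow> real) \<Rightarrow> bool" where
  "is_weight a \<longleftrightarrow> (\<forall>i j. 1 \<le> i \<longrightarrow> i \<le> j \<longrightarrow> a j \<le> a i) \<and>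
     (\<forall>i\<ge>1. 0 < a i \<and> a i \<le> 1/2) \<and> a 1 = 1/2 \<and> a 2 = 1/2 \<and> a \<longlonglongrightarrow> 0"

definition Delta :: "(nat \<Rightarrow> real) \<Rightarrow> nat list \<Rightarrow> real" where
  "Delta a v = prod_list (map a v)"

definition rho :: "nat set \<Rightarrow> (nat \<Rightarrow> real) \<Rightarrow> (nat \<Rightarrow> nat) \<Rightarrow> (nat \<Rightarrow> nat) \<Rightarrow> real" where
  "rho A a w u = Inf {sum_list (map (Delta a) vs) | vs. is_chain A w u vs}"

definition Tcarrier :: "nat set \<Rightarrow> (nat \<Rightarrow> real) \<Rightarrow> (nat \<Rightarrow> nat) set set" where
  "Tcarrier A a = iwords A // {(x, y). x \<in> iwords A \<and> y \<in> iwords A \<and> rho A a x y = 0}"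

definition Tdist :: "nat set \<Rightarrow> (nat \<Rightarrow> real) \<Rightarrow> (nat \<Rightarrow> nat) set \<Rightarrow> (nat \<Rightarrow> nat) set \<Rightarrow> real" where
  "Tdist A a X Y = rho A a (SOME x. x \<in> X) (SOME y. y \<in> Y)"

definition mball' :: "'a set \<Rightarrow> ('a \<Rightarrow> 'a \<Rightarrow> real) \<Rightarrow> 'a \<Rightarrow> real \<Rightarrow> 'a set" where
  "mball' M d x r = {y \<in> M. d x y < r}"

definition diam' :: "('a \<Rightarrow> 'a \<Rightarrow> real) \<Rightarrow> 'a set \<Rightarrow> real" where
  "diam' d U = (if U = {} then 0 else Sup {d x y | x y. x \<in> U \<and> y \<in> U})"

definition mopen' :: "'a set \<Rightarrow> ('a \<Rightarrow> 'a \<Rightarrow> real) \<Rightarrow> 'a set \<Rightarrow> bool" where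
  "mopen' M d U \<longleftrightarrow> U \<subseteq> M \<and> (\<forall>x\<in>U. \<exists>r>0. mball' M d x r \<subseteq> U)"

definition borel_sets' :: "'a set \<Rightarrow> ('a \<Rightarrow> 'a \<Rightarrow> real) \<Rightarrow> 'a set set" where
  "borel_sets' M d = sigma_sets M {U. mopen' M d U}"

definition ahlfors_regular :: "'a set \<Rightarrow> ('a \<Rightarrow> 'a \<Rightarrow> real) \<Rightarrow> real \<Rightarrow> bool" where
  "ahlfors_regular M d s \<longleftrightarrow> (\<exists>(\<mu>::'a measure) C. space \<mu> = M \<and> sets \<mu> = borel_sets' M d \<and> C > 1 \<and>
     (\<forall>x\<in>M. \<forall>r. 0 < r \<and> r < diam' d M \<longrightarrow>
        ennreal (r powr s / C) \<le> emeasure \<mu> (mball' M d x r) \<and>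
        emeasure \<mu> (mball' M d x r) \<le> ennreal (C * r powr s)))"

definition hcontrib :: "('a \<Rightarrow> 'a \<Rightarrow> real) \<Rightarrow> real \<Rightarrow> 'a set \<Rightarrow> ennreal" where
  "hcontrib d s U = (if U = {} then 0 else if s = 0 then 1 else ennreal (diam' d U powr s))"

definition hausdorff_pre :: "'a set \<Rightarrow> ('a \<Rightarrow> 'a \<Rightarrow> real) \<Rightarrow> real \<Rightarrow> real \<Rightarrow> 'a set \<Rightarrow> ennreal" where
  "hausdorff_pre M d s \<delta> E = (INF U \<in> {U :: nat \<Rightarrow> 'a set. (\<forall>i. U i \<subseteq> M \<and> diam' d (U i) \<le> \<delta>) \<and> E \<subseteq> (\<Union>i. U i)}.
      (\<Sum>i. hcontrib d s (U i)))"

definition hausdorff_measure :: "'a set \<Rightarrow> ('a \<Rightarrow> 'a \<Rightarrow> real) \<Rightarrow> real \<Rightarrow> 'a set \<Rightarrow> ennreal" where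
  "hausdorff_measure M d s E = (SUP \<delta> \<in> {0<..}. hausdorff_pre M d s \<delta> E)"

definition hausdorff_dim :: "'a set \<Rightarrow> ('a \<Rightarrow> 'a \<Rightarrow> real) \<Rightarrow> ereal" where
  "hausdorff_dim M d = Inf {ereal t | t. 0 \<le> t \<and> hausdorff_measure M d t M = 0}"

definition Psi :: "nat \<Rightarrow> (nat \<Rightarrow> real) \<Rightarrow> real \<Rightarrow> real" where
  "Psi m a t = (\<Sum>i=1..m. a i powr t)"

end

theory Submission
  imports Defs "HOL-Probability.Probability"
begin

text \<open>The natural measure on the quotient is the image of the Bernoulli measure giving the letter i
  the weight a i powr s, so that the cylinder of a word v has measure Delta a v powr s.  A ball of
  radius r contains a cylinder with Delta \<ge> r min a, and for a finite alphabet it is covered by at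
  most 2 m + 1 cylinders with Delta \<le> 8 r / min a.  The covering rests on lower bounds for rho,
  which come from 1-Lipschitz cylinder coordinates mapping the subtree of a word u onto an arc of
  length Delta a u.  For the infinite alphabet, the cylinders of length n cover the space by sets of
  diameter at most (1/2) ^ n, and the normalised Bernoulli measure shows that their Delta's raised
  to the power s sum to at most (lim Psi) ^ n, which tends to 0.\<close>

section \<open>Infinite words\<close>

definition prepend :: "nat list \<Rightarrow> (nat \<Rightarrow> nat) \<Rightarrow> (nat \<Rightarrow> nat)" where
  "prepend u f = (\<lambda>n. if n < length u then u ! n else f (n - length u))"

definition const_word :: "nat \<Rightarrow> (nat \<Rightarrow> nat)" where
  "const_word c = (\<lambda>_. c)"

definition wtl :: "(nat \<Rightarrow> nat) \<Rightarrow> (nat \<Rightarrow> nat)" where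
  "wtl f = (\<lambda>n. f (Suc n))"

definition wdrop :: "nat \<Rightarrow> (nat \<Rightarrow> nat) \<Rightarrow> (nat \<Rightarrow> nat)" where
  "wdrop k f = (\<lambda>n. f (n + k))"

lemma prepend_Nil [simp]: "prepend [] f = f"
  by (simp add: prepend_def)

lemma prepend_nth [simp]: "n < length u \<Longrightarrow> prepend u f n = u ! n"
  by (simp add: prepend_def)

lemma wtl_prepend_Cons [simp]: "wtl (prepend (c # u) f) = prepend u f"
  by (auto simp: prepend_def wtl_def fun_eq_iff)

lemma prepend_append: "prepend (u @ v) f = prepend u (prepend v f)"
  by (auto simp: prepend_def fun_eq_iff nth_append)

lemma const_word_apply: "const_word c n = c"
  by (simp add: const_word_def)

lemma wtl_const_word [simp]: "wtl (const_word c) = const_word c"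
  by (simp add: const_word_def wtl_def)

lemma prepend_replicate_const_word: "prepend (replicate k c) (const_word c) = const_word c"
  by (auto simp: prepend_def const_word_def fun_eq_iff)

lemma prepend_wdrop: "(\<forall>i<length w. y i = w ! i) \<Longrightarrow> y = prepend w (wdrop (length w) y)"
  by (auto simp: prepend_def wdrop_def fun_eq_iff)

lemma pref_eq_iff: "pref y n = w \<longleftrightarrow> length w = n \<and> (\<forall>i<n. y i = w ! i)"
  by (auto simp: pref_def list_eq_iff_nth_eq)

lemma length_pref [simp]: "length (pref y n) = n"
  by (simp add: pref_def)

lemma nth_pref [simp]: "i < n \<Longrightarrow> pref y n ! i = y i"
  by (simp add: pref_def)

lemma iwords_iff: "w \<in> iwords A \<longleftrightarrow> (\<forall>n. w n \<in> A)"
  by (simp add: iwords_def)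

lemma icyl_iff: "w \<in> icyl A u \<longleftrightarrow> w \<in> iwords A \<and> (\<forall>i<length u. w i = u ! i)"
  by (auto simp: icyl_def pref_eq_iff)

lemma allfwords_iff: "v \<in> allfwords A \<longleftrightarrow> set v \<subseteq> A"
  by (auto simp: allfwords_def fwords_def)

lemma fwords_iff: "v \<in> fwords A n \<longleftrightarrow> length v = n \<and> set v \<subseteq> A"
  by (auto simp: fwords_def)

lemma set_subset_if_icyl: "w \<in> icyl A u \<Longrightarrow> set u \<subseteq> A"
  by (auto simp: icyl_iff iwords_iff in_set_conv_nth) metis

lemma set_pref_subset: "w \<in> iwords A \<Longrightarrow> set (pref w n) \<subseteq> A"
  by (auto simp: pref_def iwords_iff)

lemma icyl_Nil [simp]: "icyl A [] = iwords A"
  by (auto simp: icyl_iff)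

lemma icyl_pref: "w \<in> iwords A \<Longrightarrow> w \<in> icyl A (pref w n)"
  by (simp add: icyl_iff)

lemma prepend_iwords: "set u \<subseteq> A \<Longrightarrow> f \<in> iwords A \<Longrightarrow> prepend u f \<in> iwords A"
  by (auto simp: iwords_iff prepend_def dest: nth_mem)

lemma const_word_iwords: "c \<in> A \<Longrightarrow> const_word c \<in> iwords A"
  by (simp add: iwords_iff const_word_def)

lemma prepend_icyl: "set (u @ v) \<subseteq> A \<Longrightarrow> f \<in> iwords A \<Longrightarrow> prepend u (prepend v f) \<in> icyl A (u @ v)"
  by (auto simp: icyl_iff prepend_append[symmetric] intro!: prepend_iwords)

lemma half_power_less: "0 < (e::real) \<Longrightarrow> \<exists>n\<ge>N. (1/2::real) ^ n < e"
proof -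
  assume e: "0 < e"
  obtain n where n: "(1/2::real) ^ n < e" using real_arch_pow_inv[OF e, of "1/2"] by auto
  have "(1/2::real) ^ (n + N) \<le> (1/2) ^ n" by (rule power_decreasing) auto
  then have "(1/2::real) ^ (n + N) < e" using n by linarith
  then show ?thesis using le_add2 by blast
qed

lemma Delta_Nil [simp]: "Delta a [] = 1"
  by (simp add: Delta_def)

lemma Delta_Cons [simp]: "Delta a (c # v) = a c * Delta a v"
  by (simp add: Delta_def)

lemma Delta_append: "Delta a (u @ v) = Delta a u * Delta a v"
  by (simp add: Delta_def)

lemma Delta_pref_Suc: "Delta a (pref x (Suc k)) = Delta a (pref x k) * a (x k)"
  by (simp add: pref_def Delta_append)

text \<open>The arc coordinate reads a word as a binary expansion with 1 and 2 as the digits 0 and 1;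
  a letter c \<ge> 3 counts as the digit 1 followed by zeros, in accordance with the identification
  of c 1 1 1 ... with 1 2 2 2 ... .\<close>

definition arc_term :: "(nat \<Rightarrow> nat) \<Rightarrow> nat \<Rightarrow> real" where
  "arc_term z k = (if (\<forall>l<k. z l = 1 \<or> z l = 2) \<and> z k \<noteq> 1 then (1/2) ^ Suc k else 0)"

definition arc_coord :: "(nat \<Rightarrow> nat) \<Rightarrow> real" where
  "arc_coord z = suminf (arc_term z)"

lemma summable_arc_term: "summable (arc_term z)"
  by (rule summable_comparison_test[OF _ sums_summable[OF power_half_series]])
     (auto simp: arc_term_def)

lemma arc_coord_nonneg: "0 \<le> arc_coord z"
  unfolding arc_coord_def by (rule suminf_nonneg[OF summable_arc_term]) (simp add: arc_term_def)

lemma arc_coord_le_1: "arc_coord z \<le> 1"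
proof -
  have "arc_coord z \<le> (\<Sum>k. (1/2::real) ^ Suc k)"
    unfolding arc_coord_def
    by (rule suminf_le[OF _ summable_arc_term sums_summable[OF power_half_series]])
       (simp add: arc_term_def)
  then show ?thesis using sums_unique[OF power_half_series] by simp
qed

lemma arc_coord_rec:
  "arc_coord z = (if z 0 = 1 then arc_coord (wtl z) / 2
                  else if z 0 = 2 then 1/2 + arc_coord (wtl z) / 2 else 1/2)"
proof -
  have split: "arc_coord z = arc_term z 0 + (\<Sum>k. arc_term z (Suc k))"
    unfolding arc_coord_def using suminf_split_head[OF summable_arc_term] by simp
  have tail: "arc_term z (Suc k) = (if z 0 = 1 \<or> z 0 = 2 then arc_term (wtl z) k / 2 else 0)" for k
  proof -
    have "(\<forall>l<Suc k. z l = 1 \<or> z l = 2) \<longleftrightarrow>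
        (z 0 = 1 \<or> z 0 = 2) \<and> (\<forall>l<k. wtl z l = 1 \<or> wtl z l = 2)"
      by (auto simp: wtl_def less_Suc_eq_0_disj)
    then show ?thesis by (auto simp: arc_term_def wtl_def)
  qed
  show ?thesis
  proof (cases "z 0 = 1 \<or> z 0 = 2")
    case True
    then have "(\<Sum>k. arc_term z (Suc k)) = (\<Sum>k. arc_term (wtl z) k / 2)"
      by (simp add: tail)
    also have "\<dots> = arc_coord (wtl z) / 2"
      unfolding arc_coord_def by (rule suminf_divide[OF summable_arc_term])
    finally show ?thesis using True split by (auto simp: arc_term_def)
  next
    case False
    then show ?thesis using split tail by (auto simp: arc_term_def)
  qed
qed

lemma arc_coord_prepend_Cons:
  "arc_coord (prepend (c # u) f) = (if c = 1 then arc_coord (prepend u f) / 2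
     else if c = 2 then 1/2 + arc_coord (prepend u f) / 2 else 1/2)"
  by (subst arc_coord_rec) simp

lemma arc_coord_const_1 [simp]: "arc_coord (const_word 1) = 0" "arc_coord (const_word (Suc 0)) = 0"
proof -
  have "arc_term (const_word 1) = (\<lambda>_. 0)"
    by (simp add: arc_term_def const_word_def fun_eq_iff)
  then show "arc_coord (const_word 1) = 0" "arc_coord (const_word (Suc 0)) = 0"
    by (simp_all add: arc_coord_def)
qed

lemma arc_coord_const_2 [simp]: "arc_coord (const_word 2) = 1"
proof -
  have "arc_term (const_word 2) = (\<lambda>k. (1/2::real) ^ Suc k)"
    by (auto simp: arc_term_def const_word_def fun_eq_iff)
  then show ?thesis unfolding arc_coord_def using sums_unique[OF power_half_series] by simp
qed

lemma arc_coord_small_imp_ones: "arc_coord z < (1/2) ^ j \<Longrightarrow> \<forall>i<j. z i = 1"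
proof (induction j arbitrary: z)
  case (Suc j)
  have "z 0 = 1"
  proof (rule ccontr)
    assume "z 0 \<noteq> 1"
    then have "1/2 \<le> arc_coord z"
      using arc_coord_nonneg[of "wtl z"] by (subst arc_coord_rec) auto
    moreover have "(1/2::real) ^ Suc j \<le> 1/2" by (simp add: power_le_one)
    ultimately show False using Suc.prems by linarith
  qed
  then have "\<forall>i<j. wtl z i = 1"
    using Suc.prems by (intro Suc.IH) (subst (asm) arc_coord_rec, simp)
  then show ?case using \<open>z 0 = 1\<close> by (auto simp: wtl_def less_Suc_eq_0_disj)
qed simp

lemma arc_coord_large_imp_twos: "1 - (1/2) ^ j < arc_coord z \<Longrightarrow> \<forall>i<j. z i = 2"
proof (induction j arbitrary: z)
  case (Suc j)
  have "z 0 = 2"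
  proof (rule ccontr)
    assume "z 0 \<noteq> 2"
    then have "arc_coord z \<le> 1/2"
      using arc_coord_le_1[of "wtl z"] by (subst arc_coord_rec) auto
    moreover have "(1/2::real) ^ Suc j \<le> 1/2" by (simp add: power_le_one)
    ultimately show False using Suc.prems by linarith
  qed
  then have "\<forall>i<j. wtl z i = 2"
    using Suc.prems by (intro Suc.IH) (subst (asm) arc_coord_rec, simp)
  then show ?case using \<open>z 0 = 2\<close> by (auto simp: wtl_def less_Suc_eq_0_disj)
qed simp

section \<open>The graphs and their wedges\<close>

lemma edges_form:
  "e \<in> edges A n \<Longrightarrow>
     \<exists>s j c. c \<in> A - {1} \<and> set s \<subseteq> A \<and> e = {s @ 1 # replicate j 2, s @ c # replicate j 1}"
proof (induction A n arbitrary: e rule: edges.induct)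
  case (2 A)
  then obtain c where "c \<in> A - {1}" "e = {[] @ 1 # replicate 0 2, [] @ c # replicate 0 1}"
    by auto
  moreover have "set [] \<subseteq> A" by simp
  ultimately show ?case by blast
next
  case (3 A k)
  then consider c where "c \<in> A - {1}"
      "e = {[] @ 1 # replicate (Suc k) 2, [] @ c # replicate (Suc k) 1}"
    | i w u where "i \<in> A" "{w, u} \<in> edges A (Suc k)" "e = {i # w, i # u}"
    by auto
  then show ?case
  proof cases
    case (2 i w u)
    then obtain s j c where "c \<in> A - {1}" "set s \<subseteq> A"
        "{w, u} = {s @ 1 # replicate j 2, s @ c # replicate j 1}"
      using "3.IH" by blast
    then have "set (i # s) \<subseteq> A"
      "e = {(i # s) @ 1 # replicate j 2, (i # s) @ c # replicate j 1}"
      using 2 by (auto simp: doubleton_eq_iff)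
    then show ?thesis using \<open>c \<in> A - {1}\<close> by blast
  next
    case (1 c)
    moreover have "set [] \<subseteq> A" by simp
    ultimately show ?thesis by blast
  qed
qed simp

lemma junction_pair_in_edges:
  "c \<in> A - {1} \<Longrightarrow> set s \<subseteq> A \<Longrightarrow>
     {s @ 1 # replicate j 2, s @ c # replicate j 1} \<in> edges A (length s + 1 + j)"
proof (induction s)
  case Nil
  then show ?case by (cases j) auto
next
  case (Cons i s)
  then show ?case by simp blast
qed
locale alphabet =
  fixes A :: "nat set"
  assumes one_in: "1 \<in> A" and two_in: "2 \<in> A" and positive: "A \<subseteq> {1..}"
begin

lemma exists_edge_changing_last:
  assumes "set s \<subseteq> A" "c \<in> A"
  shows "\<exists>c'\<in>A. {s @ [c], s @ [c']} \<in> edges A (Suc (length s))"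
proof (cases "c = 1")
  case True
  have "{s @ 1 # replicate 0 2, s @ 2 # replicate 0 1} \<in> edges A (length s + 1 + 0)"
    by (rule junction_pair_in_edges) (use assms two_in in auto)
  then show ?thesis using True two_in by auto
next
  case False
  have "{s @ 1 # replicate 0 2, s @ c # replicate 0 1} \<in> edges A (length s + 1 + 0)"
    by (rule junction_pair_in_edges) (use assms False in auto)
  then show ?thesis using one_in by (auto simp: insert_commute)
qed

lemma wedge1_of_nested:
  assumes "length u2 \<le> length u1" "w \<in> icyl A u1" "w \<in> icyl A u2"
  shows "w \<in> wedge1 A u1 u2"
  unfolding wedge1_def
proof (intro CollectI conjI allI impI)
  show "w \<in> icyl A u1" by fact
  fix n assume n: "max (length u1) (length u2) < n"
  have w: "w \<in> iwords A" using assms by (simp add: icyl_iff)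
  define s where "s = pref w (n - 1)"
  have s: "set s \<subseteq> A" "Suc (length s) = n" "length u2 \<le> length s"
    using set_pref_subset[OF w] n by (auto simp: s_def)
  have pref_n: "pref w n = s @ [w (n - 1)]"
    using n by (cases n) (auto simp: s_def pref_def)
  obtain c' where c': "c' \<in> A" "{s @ [w (n - 1)], s @ [c']} \<in> edges A n"
    using exists_edge_changing_last[OF s(1)] w s(2) by (auto simp: iwords_iff)
  have "take (length u2) (s @ [c']) = take (length u2) (pref w n)"
    using s(3) pref_n by simp
  also have "\<dots> = u2"
    using assms(3) n by (auto simp: icyl_iff pref_def list_eq_iff_nth_eq)
  finally have "s @ [c'] \<in> fcyl A n u2"
    using s c' by (simp add: fcyl_def fwords_iff)
  then show "\<exists>u\<in>fcyl A n u2. {pref w n, u} \<in> edges A n"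
    using c' pref_n by auto
qed

lemma wedge_nonempty_if_common_word:
  "w \<in> icyl A u1 \<Longrightarrow> w \<in> icyl A u2 \<Longrightarrow> wedge A u1 u2 \<noteq> {}"
  using wedge1_of_nested[of u1 u2 w] wedge1_of_nested[of u2 u1 w]
  by (cases "length u2 \<le> length u1") (auto simp: wedge_def)

end

section \<open>The cylinder coordinate\<close>

text \<open>The words s 1 2 2 2 ... and s c 1 1 1 ... (c \<noteq> 1) are glued together by the chains; they
  give the point where the subtree of s c is attached to the rest.\<close>

definition junction_left :: "nat list \<Rightarrow> (nat \<Rightarrow> nat)" where
  "junction_left s = prepend (s @ [1]) (const_word 2)"

definition junction_right :: "nat list \<Rightarrow> nat \<Rightarrow> (nat \<Rightarrow> nat)" where
  "junction_right s c = prepend (s @ [c]) (const_word 1)"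

lemma junction_left_nth:
  "i < length s + 1 + j \<Longrightarrow> junction_left s i = (s @ 1 # replicate j 2) ! i"
  by (auto simp: junction_left_def prepend_def nth_append nth_Cons' const_word_def)

lemma junction_right_nth:
  "i < length s + 1 + j \<Longrightarrow> junction_right s c i = (s @ c # replicate j 1) ! i"
  by (auto simp: junction_right_def prepend_def nth_append nth_Cons' const_word_def)

lemma arc_coord_junction:
  "c \<noteq> 1 \<Longrightarrow> arc_coord (junction_left s) = arc_coord (junction_right s c)"
  by (induction s) (auto simp: junction_left_def junction_right_def arc_coord_prepend_Cons)

text \<open>cyl_coord a t z is Delta a t times the arc coordinate of the retraction of z onto the
  cylinder of t: a word leaving the subtree of c is sent to its attachment point, which is
  1 2 2 2 ... for c = 1 and c 1 1 1 ... otherwise.\<close>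

fun cyl_coord :: "(nat \<Rightarrow> real) \<Rightarrow> nat list \<Rightarrow> (nat \<Rightarrow> nat) \<Rightarrow> real" where
  "cyl_coord a [] z = arc_coord z"
| "cyl_coord a (c # t) z =
     (if z 0 = c then a c * cyl_coord a t (wtl z)
      else a c * cyl_coord a t (const_word (if c = 1 then 2 else 1)))"

lemma cyl_coord_junction:
  "c \<noteq> 1 \<Longrightarrow> cyl_coord a t (junction_left s) = cyl_coord a t (junction_right s c)"
proof (induction t arbitrary: s)
  case Nil
  then show ?case by (simp add: arc_coord_junction)
next
  case (Cons d t)
  then show ?case by (cases s) (auto simp: junction_left_def junction_right_def)
qed

lemma cyl_coord_prepend: "cyl_coord a w (prepend w z) = Delta a w * arc_coord z"
  by (induction w) auto

lemma cyl_coord_junction_left_self: "cyl_coord a t (junction_left t) = Delta a t / 2"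
  by (simp add: junction_left_def prepend_append cyl_coord_prepend arc_coord_prepend_Cons)

lemma cyl_coord_const_word:
  "e \<in> {1, 2} \<Longrightarrow> cyl_coord a t (const_word e) = 0 \<or> cyl_coord a t (const_word e) = Delta a t"
proof (induction t arbitrary: e)
  case (Cons c t)
  define e' where "e' = (if e = c then e else if c = 1 then 2 else 1)"
  have "cyl_coord a (c # t) (const_word e) = a c * cyl_coord a t (const_word e')"
    by (simp add: const_word_apply e'_def)
  moreover have "e' \<in> {1, 2}" using Cons.prems by (auto simp: e'_def)
  ultimately show ?case using Cons.IH by auto
qed auto

lemma cyl_coord_outside:
  "\<not> (\<forall>i<length t. y i = t ! i) \<Longrightarrow> cyl_coord a t y = 0 \<or> cyl_coord a t y = Delta a t"
proof (induction t arbitrary: y)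
  case (Cons c t)
  show ?case
  proof (cases "y 0 = c")
    case True
    then have "\<not> (\<forall>i<length t. wtl y i = t ! i)"
      using Cons.prems by (auto simp: wtl_def less_Suc_eq_0_disj)
    then show ?thesis using Cons.IH True by auto
  next
    case False
    then show ?thesis using cyl_coord_const_word[of "if c = 1 then 2 else 1" a t] by auto
  qed
qed simp

lemma cyl_coord_outside_last_exotic:
  "c \<notin> {1, 2} \<Longrightarrow> \<not> (\<forall>i<Suc (length t). y i = (t @ [c]) ! i) \<Longrightarrow> cyl_coord a (t @ [c]) y = 0"
proof (induction t arbitrary: y)
  case (Cons d t)
  show ?case
  proof (cases "y 0 = d")
    case True
    then have "\<not> (\<forall>i<Suc (length t). wtl y i = (t @ [c]) ! i)"
      using Cons.prems by (auto simp: wtl_def less_Suc_eq_0_disj)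
    then show ?thesis using Cons.IH Cons.prems True by auto
  next
    case False
    have "\<not> (\<forall>i<Suc (length t). const_word (if d = 1 then 2 else 1) i = (t @ [c]) ! i)"
      using Cons.prems(1) by (auto intro!: exI[of _ "length t"] simp: const_word_apply)
    then show ?thesis using Cons.IH Cons.prems False by auto
  qed
qed simp

lemma weight_pos: "is_weight a \<Longrightarrow> 1 \<le> i \<Longrightarrow> 0 < a i"
  by (simp add: is_weight_def)

lemma weight_le_half: "is_weight a \<Longrightarrow> 1 \<le> i \<Longrightarrow> a i \<le> 1/2"
  by (simp add: is_weight_def)

locale weighted_alphabet = alphabet A for A +
  fixes a :: "nat \<Rightarrow> real"
  assumes weight: "is_weight a"
begin

lemma a_pos: "c \<in> A \<Longrightarrow> 0 < a c"
  using weight_pos[OF weight] positive by auto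

lemma a_le_half: "c \<in> A \<Longrightarrow> a c \<le> 1/2"
  using weight_le_half[OF weight] positive by auto

lemma a_1 [simp]: "a 1 = 1/2" "a (Suc 0) = 1/2" and a_2 [simp]: "a 2 = 1/2"
  using weight by (simp_all add: is_weight_def)

lemma Delta_nonneg: "set v \<subseteq> A \<Longrightarrow> 0 \<le> Delta a v"
  by (induction v) (auto intro!: mult_nonneg_nonneg less_imp_le[OF a_pos])

lemma Delta_le_half_power: "set v \<subseteq> A \<Longrightarrow> Delta a v \<le> (1/2) ^ length v"
proof (induction v)
  case (Cons c v)
  then have "a c * Delta a v \<le> (1/2) * (1/2) ^ length v"
    by (intro mult_mono a_le_half Delta_nonneg) auto
  then show ?case by simp
qed simp

lemma Delta_le_1: "set v \<subseteq> A \<Longrightarrow> Delta a v \<le> 1"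
  using Delta_le_half_power[of v] power_le_one[of "1/2::real" "length v"] by linarith

lemma Delta_append_le: "set (u @ v) \<subseteq> A \<Longrightarrow> Delta a (u @ v) \<le> Delta a u"
  using Delta_nonneg[of u] Delta_le_1[of v] mult_left_mono[of "Delta a v" 1 "Delta a u"]
  by (simp add: Delta_append)

lemma Delta_replicate: "e \<in> {1, 2} \<Longrightarrow> Delta a (replicate k e) = (1/2) ^ k"
  by (induction k) auto

lemma Delta_pref_less:
  assumes "w \<in> iwords A" "0 < r"
  shows "\<exists>n\<ge>N. Delta a (pref w n) < r"
proof -
  obtain n where "n \<ge> N" "(1/2::real) ^ n < r" using half_power_less[OF assms(2)] by blast
  then show ?thesis
    using Delta_le_half_power[OF set_pref_subset[OF assms(1)], of n] by (auto intro!: exI[of _ n])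
qed

lemma cyl_coord_range: "set t \<subseteq> A \<Longrightarrow> 0 \<le> cyl_coord a t z \<and> cyl_coord a t z \<le> Delta a t"
proof (induction t arbitrary: z)
  case Nil
  then show ?case using arc_coord_nonneg arc_coord_le_1 by simp
next
  case (Cons c t)
  then have "0 < a c" "\<And>w. 0 \<le> cyl_coord a t w \<and> cyl_coord a t w \<le> Delta a t"
    using a_pos by auto
  then show ?case by (auto intro: mult_left_mono)
qed

lemma arc_coord_osc:
  "set v \<subseteq> A \<Longrightarrow> \<forall>i<length v. z i = v ! i \<Longrightarrow> \<forall>i<length v. z' i = v ! i
    \<Longrightarrow> \<bar>arc_coord z - arc_coord z'\<bar> \<le> Delta a v"
proof (induction v arbitrary: z z')
  case Nil
  then show ?case using arc_coord_nonneg[of z] arc_coord_le_1[of z] arc_coord_nonneg[of z']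
      arc_coord_le_1[of z'] by simp
next
  case (Cons c v)
  have z0: "z 0 = c" "z' 0 = c" using Cons.prems by auto
  have IH: "\<bar>arc_coord (wtl z) - arc_coord (wtl z')\<bar> \<le> Delta a v"
    using Cons by (auto simp: wtl_def)
  show ?case
  proof (cases "c = 1 \<or> c = 2")
    case True
    then have eq: "arc_coord z - arc_coord z' = (arc_coord (wtl z) - arc_coord (wtl z')) / 2"
      by (subst (1 2) arc_coord_rec) (auto simp: z0 field_simps)
    show ?thesis unfolding eq using IH True by auto
  next
    case False
    then have "arc_coord z = arc_coord z'" by (subst (1 2) arc_coord_rec) (auto simp: z0)
    then show ?thesis using Delta_nonneg[of "c # v"] Cons.prems(1) by simp
  qed
qed

lemma cyl_coord_osc:
  "set t \<subseteq> A \<Longrightarrow> set v \<subseteq> A \<Longrightarrow> \<forall>i<length v. z i = v ! i \<Longrightarrow> \<forall>i<length v. z' i = v ! i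
    \<Longrightarrow> \<bar>cyl_coord a t z - cyl_coord a t z'\<bar> \<le> Delta a v"
proof (induction t arbitrary: v z z')
  case Nil
  then show ?case using arc_coord_osc by simp
next
  case (Cons c t)
  show ?case
  proof (cases v)
    case Nil
    then show ?thesis
      using cyl_coord_range[of "c # t" z] cyl_coord_range[of "c # t" z'] Delta_le_1[of "c # t"] Cons.prems
      by (simp add: abs_le_iff)
  next
    case (Cons d v')
    have z0: "z 0 = d" "z' 0 = d" using Cons.prems Cons by auto
    have "0 \<le> a c" using a_pos[of c] Cons.prems by simp
    show ?thesis
    proof (cases "d = c")
      case True
      have "\<bar>cyl_coord a t (wtl z) - cyl_coord a t (wtl z')\<bar> \<le> Delta a v'"
        using Cons.IH[of v' "wtl z" "wtl z'"] Cons.prems Cons by (auto simp: wtl_def)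
      then have "a c * \<bar>cyl_coord a t (wtl z) - cyl_coord a t (wtl z')\<bar> \<le> a c * Delta a v'"
        using \<open>0 \<le> a c\<close> by (rule mult_left_mono)
      then show ?thesis
        using z0 True Cons \<open>0 \<le> a c\<close> by (simp add: abs_mult right_diff_distrib[symmetric])
    next
      case False
      then show ?thesis using z0 Delta_nonneg Cons.prems by simp
    qed
  qed
qed

lemma cyl_coord_icyl_osc:
  "set t \<subseteq> A \<Longrightarrow> z \<in> icyl A v \<Longrightarrow> z' \<in> icyl A v \<Longrightarrow> \<bar>cyl_coord a t z - cyl_coord a t z'\<bar> \<le> Delta a v"
  using cyl_coord_osc set_subset_if_icyl by (simp add: icyl_iff)

end

section \<open>Chains and the pseudometric\<close>

lemma wedge_sym: "wedge A u1 u2 = wedge A u2 u1"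
  by (auto simp: wedge_def)

lemma is_chain_set: "is_chain A x y vs \<Longrightarrow> v \<in> set vs \<Longrightarrow> set v \<subseteq> A"
  unfolding is_chain_def allfwords_iff[symmetric] by blast

lemma is_chain_snocD:
  assumes "is_chain A x y (vs @ [v])" "vs \<noteq> []"
  shows "wedge A (last vs) v \<noteq> {}" "y \<in> icyl A v" "set v \<subseteq> A" "set (last vs) \<subseteq> A"
proof -
  have "Suc (length vs - 1) < length (vs @ [v])" using assms(2) by simp
  then have "wedge A ((vs @ [v]) ! (length vs - 1)) ((vs @ [v]) ! Suc (length vs - 1)) \<noteq> {}"
    using assms(1) unfolding is_chain_def by blast
  then show "wedge A (last vs) v \<noteq> {}"
    using assms(2) by (simp add: nth_append last_conv_nth)
  show "y \<in> icyl A v" using assms by (simp add: is_chain_def)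
  show "set v \<subseteq> A" "set (last vs) \<subseteq> A"
    using is_chain_set[OF assms(1)] assms(2) by auto
qed

lemma is_chain_butlast:
  assumes "is_chain A x y (vs @ [v])" "vs \<noteq> []" "z \<in> icyl A (last vs)"
  shows "is_chain A x z vs"
  using assms unfolding is_chain_def
proof (elim conjE, intro conjI allI impI)
  fix i assume chain: "\<forall>i. Suc i < length (vs @ [v]) \<longrightarrow>
      wedge A ((vs @ [v]) ! i) ((vs @ [v]) ! Suc i) \<noteq> {}" and i: "Suc i < length vs"
  then show "wedge A (vs ! i) (vs ! Suc i) \<noteq> {}"
    using chain[rule_format, of i] by (simp add: nth_append)
qed auto

lemma chain_sum_bound:
  assumes osc: "\<And>v z z'. set v \<subseteq> A \<Longrightarrow> z \<in> icyl A v \<Longrightarrow> z' \<in> icyl A v \<Longrightarrow>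
      \<bar>g z - g z'\<bar> \<le> Delta a v"
    and close: "\<And>u1 u2 e. set u1 \<subseteq> A \<Longrightarrow> set u2 \<subseteq> A \<Longrightarrow> wedge A u1 u2 \<noteq> {} \<Longrightarrow> 0 < e \<Longrightarrow>
      \<exists>z1\<in>icyl A u1. \<exists>z2\<in>icyl A u2. \<bar>g z1 - g z2\<bar> < e"
  shows "is_chain A x y vs \<Longrightarrow> \<bar>g x - g y\<bar> \<le> sum_list (map (Delta a) vs)"
proof (induction vs arbitrary: y rule: rev_induct)
  case Nil
  then show ?case by (simp add: is_chain_def)
next
  case (snoc v vs)
  show ?case
  proof (cases "vs = []")
    case True
    then show ?thesis using snoc.prems osc by (auto simp: is_chain_def allfwords_iff)
  next
    case False
    note last = is_chain_snocD[OF snoc.prems False]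
    show ?thesis
    proof (rule field_le_epsilon)
      fix e :: real assume "0 < e"
      then obtain z1 z2 where z: "z1 \<in> icyl A (last vs)" "z2 \<in> icyl A v" "\<bar>g z1 - g z2\<bar> < e"
        using close last by blast
      have "\<bar>g x - g z1\<bar> \<le> sum_list (map (Delta a) vs)"
        using snoc.IH is_chain_butlast[OF snoc.prems False z(1)] by blast
      moreover have "\<bar>g z2 - g y\<bar> \<le> Delta a v" using osc last z(2) by blast
      ultimately show "\<bar>g x - g y\<bar> \<le> sum_list (map (Delta a) (vs @ [v])) + e"
        using z(3) by simp
    qed
  qed
qed

lemma is_chain_single: "x \<in> icyl A v \<Longrightarrow> y \<in> icyl A v \<Longrightarrow> is_chain A x y [v]"
  by (auto simp: is_chain_def allfwords_iff dest: set_subset_if_icyl)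

lemma is_chain_rev: "is_chain A x y vs \<Longrightarrow> is_chain A y x (rev vs)"
  unfolding is_chain_def
proof (elim conjE, intro conjI allI impI)
  fix i assume chain: "\<forall>i. Suc i < length vs \<longrightarrow> wedge A (vs ! i) (vs ! Suc i) \<noteq> {}"
    and i: "Suc i < length (rev vs)"
  define k where "k = length vs - Suc (Suc i)"
  have "rev vs ! i = vs ! Suc k" "rev vs ! Suc i = vs ! k" "Suc k < length vs"
    using i by (auto simp: rev_nth k_def Suc_diff_Suc)
  then show "wedge A (rev vs ! i) (rev vs ! Suc i) \<noteq> {}"
    using chain wedge_sym by metis
qed (auto simp: hd_rev last_rev)

context alphabet
begin

lemma is_chain_append:
  "is_chain A x y vs \<Longrightarrow> is_chain A y z ws \<Longrightarrow> is_chain A x z (vs @ ws)"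
  unfolding is_chain_def
proof (elim conjE, intro conjI allI impI)
  fix i assume ne: "vs \<noteq> []" "ws \<noteq> []" and y: "y \<in> icyl A (last vs)" "y \<in> icyl A (hd ws)"
    and vs: "\<forall>i. Suc i < length vs \<longrightarrow> wedge A (vs ! i) (vs ! Suc i) \<noteq> {}"
    and ws: "\<forall>i. Suc i < length ws \<longrightarrow> wedge A (ws ! i) (ws ! Suc i) \<noteq> {}"
    and i: "Suc i < length (vs @ ws)"
  consider "Suc i < length vs" | "Suc i = length vs" | "length vs < Suc i" by linarith
  then show "wedge A ((vs @ ws) ! i) ((vs @ ws) ! Suc i) \<noteq> {}"
  proof cases
    case 2
    then have "i = length vs - 1" by simp
    then have "(vs @ ws) ! i = last vs" "(vs @ ws) ! Suc i = hd ws"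
      using 2 ne by (auto simp: nth_append last_conv_nth hd_conv_nth)
    then show ?thesis using wedge_nonempty_if_common_word[OF y] by simp
  next
    case 3
    define k where "k = i - length vs"
    have "(vs @ ws) ! i = ws ! k" "(vs @ ws) ! Suc i = ws ! Suc k" "Suc k < length ws"
      using 3 i by (auto simp: nth_append k_def Suc_diff_le)
    then show ?thesis using ws by simp
  qed (use vs in \<open>simp add: nth_append\<close>)
qed auto

lemma junction_left_wedge1:
  assumes s: "set s \<subseteq> A" and c: "c \<in> A" "c \<noteq> 1"
  shows "junction_left s \<in> wedge1 A (s @ 1 # replicate n 2) (s @ c # replicate n 1)"
  unfolding wedge1_def
proof (intro CollectI conjI allI impI)
  show "junction_left s \<in> icyl A (s @ 1 # replicate n 2)"
    using s one_in two_in junction_left_nth[of _ s n]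
    by (auto simp: icyl_iff junction_left_def intro!: prepend_iwords const_word_iwords)
  fix N assume N: "max (length (s @ 1 # replicate n 2)) (length (s @ c # replicate n 1)) < N"
  define j where "j = N - length s - 1"
  have Nj: "length s + 1 + j = N" "n \<le> j" using N by (auto simp: j_def)
  have "pref (junction_left s) N = s @ 1 # replicate j 2"
    using junction_left_nth[of _ s j] Nj by (auto simp: pref_eq_iff)
  moreover have "{s @ 1 # replicate j 2, s @ c # replicate j 1} \<in> edges A N"
    using junction_pair_in_edges[of c A s j] s c Nj by simp
  moreover have "s @ c # replicate j 1 \<in> fcyl A N (s @ c # replicate n 1)"
  proof -
    have "replicate j (1::nat) = replicate n 1 @ replicate (j - n) 1"
      using Nj(2) by (simp add: replicate_add[symmetric])
    then show ?thesis using s c one_in Nj by (auto simp: fcyl_def fwords_iff)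
  qed
  ultimately show "\<exists>u\<in>fcyl A N (s @ c # replicate n 1). {pref (junction_left s) N, u} \<in> edges A N"
    by auto
qed

end

context weighted_alphabet
begin

lemma cyl_coord_wedge1_close:
  assumes t: "set t \<subseteq> A" and w: "w \<in> wedge1 A u1 u2" and e: "0 < e"
  shows "\<exists>z1\<in>icyl A u1. \<exists>z2\<in>icyl A u2. \<bar>cyl_coord a t z1 - cyl_coord a t z2\<bar> < e"
proof -
  have w1: "w \<in> icyl A u1" and wi: "w \<in> iwords A" using w by (auto simp: wedge1_def icyl_iff)
  obtain n where n: "n \<ge> Suc (max (length u1) (length u2))" "Delta a (pref w n) < e"
    using Delta_pref_less[OF wi e] by blast
  then obtain u where u: "u \<in> fcyl A n u2" "{pref w n, u} \<in> edges A n"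
    using w by (auto simp: wedge1_def Suc_le_eq)
  obtain s j c where sjc: "c \<in> A - {1}" "set s \<subseteq> A"
    "{pref w n, u} = {s @ 1 # replicate j 2, s @ c # replicate j 1}"
    using edges_form[OF u(2)] by blast
  have ln: "length s + 1 + j = n"
    using sjc(3) u(1) by (auto simp: doubleton_eq_iff fcyl_def fwords_iff)
  have in_u2: "z \<in> icyl A u2" if "z \<in> iwords A" "\<forall>i<n. z i = u ! i" for z
  proof -
    have "take (length u2) u = u2" "length u2 < n" using u(1) n(1) by (auto simp: fcyl_def)
    then show ?thesis using that by (auto simp: icyl_iff) (metis nth_take)
  qed
  have same: "cyl_coord a t (junction_left s) = cyl_coord a t (junction_right s c)"
    using sjc(1) by (intro cyl_coord_junction) auto
  have jl: "junction_left s \<in> iwords A" "\<forall>i<n. junction_left s i = (s @ 1 # replicate j 2) ! i"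
    using sjc(2) one_in two_in junction_left_nth[of _ s j] ln
    by (auto simp: junction_left_def intro!: prepend_iwords const_word_iwords)
  have jr: "junction_right s c \<in> iwords A" "\<forall>i<n. junction_right s c i = (s @ c # replicate j 1) ! i"
    using sjc one_in junction_right_nth[of _ s j c] ln
    by (auto simp: junction_right_def intro!: prepend_iwords const_word_iwords)
  have near_w: "\<bar>cyl_coord a t w - cyl_coord a t z\<bar> < e" if "z \<in> icyl A (pref w n)" for z
    using cyl_coord_icyl_osc[OF t icyl_pref[OF wi] that] n(2) by linarith
  from sjc(3) consider "pref w n = s @ 1 # replicate j 2" "u = s @ c # replicate j 1"
    | "pref w n = s @ c # replicate j 1" "u = s @ 1 # replicate j 2"
    by (auto simp: doubleton_eq_iff)
  then show ?thesis
  proof cases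
    case 1
    have "junction_left s \<in> icyl A (pref w n)" using jl 1 ln by (auto simp: icyl_iff)
    moreover have "junction_right s c \<in> icyl A u2" using jr 1 by (intro in_u2) auto
    ultimately show ?thesis using near_w same w1 by fastforce
  next
    case 2
    have "junction_right s c \<in> icyl A (pref w n)" using jr 2 ln by (auto simp: icyl_iff)
    then have "\<bar>cyl_coord a t w - cyl_coord a t (junction_left s)\<bar> < e" using near_w same by simp
    moreover have "junction_left s \<in> icyl A u2" using jl 2 by (intro in_u2) auto
    ultimately show ?thesis using w1 by blast
  qed
qed

lemma cyl_coord_wedge_close:
  assumes "set t \<subseteq> A" "wedge A u1 u2 \<noteq> {}" "0 < e"
  shows "\<exists>z1\<in>icyl A u1. \<exists>z2\<in>icyl A u2. \<bar>cyl_coord a t z1 - cyl_coord a t z2\<bar> < e"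
  using assms cyl_coord_wedge1_close[OF assms(1) _ assms(3), of _ u1 u2]
    cyl_coord_wedge1_close[OF assms(1) _ assms(3), of _ u2 u1]
  by (fastforce simp: wedge_def abs_minus_commute)

lemma cyl_coord_chain: "set t \<subseteq> A \<Longrightarrow> is_chain A x y vs \<Longrightarrow>
    \<bar>cyl_coord a t x - cyl_coord a t y\<bar> \<le> sum_list (map (Delta a) vs)"
  by (rule chain_sum_bound[OF cyl_coord_icyl_osc cyl_coord_wedge_close])

end

context weighted_alphabet
begin

lemma chain_sum_nonneg: "is_chain A x y vs \<Longrightarrow> 0 \<le> sum_list (map (Delta a) vs)"
  by (intro sum_list_nonneg) (auto intro!: Delta_nonneg dest: is_chain_set)

lemma rho_le_chain: "is_chain A x y vs \<Longrightarrow> rho A a x y \<le> sum_list (map (Delta a) vs)"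
  unfolding rho_def by (rule cInf_lower) (auto intro!: bdd_belowI[of _ 0] dest: chain_sum_nonneg)

lemma rho_greatest:
  assumes "x \<in> iwords A" "y \<in> iwords A" "\<And>vs. is_chain A x y vs \<Longrightarrow> c \<le> sum_list (map (Delta a) vs)"
  shows "c \<le> rho A a x y"
proof -
  have "is_chain A x y [[]]" using assms(1,2) by (auto simp: is_chain_def allfwords_iff)
  then show ?thesis unfolding rho_def by (intro cInf_greatest) (use assms(3) in auto)
qed

lemma rho_nonneg: "x \<in> iwords A \<Longrightarrow> y \<in> iwords A \<Longrightarrow> 0 \<le> rho A a x y"
  by (rule rho_greatest) (auto intro: chain_sum_nonneg)

lemma rho_le_Delta: "x \<in> icyl A v \<Longrightarrow> y \<in> icyl A v \<Longrightarrow> rho A a x y \<le> Delta a v"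
  using rho_le_chain[OF is_chain_single] by simp

lemma rho_le_1: "x \<in> iwords A \<Longrightarrow> y \<in> iwords A \<Longrightarrow> rho A a x y \<le> 1"
  using rho_le_Delta[of x "[]" y] by (simp add: icyl_iff)

lemma cyl_coord_lipschitz:
  "set t \<subseteq> A \<Longrightarrow> x \<in> iwords A \<Longrightarrow> y \<in> iwords A \<Longrightarrow>
    \<bar>cyl_coord a t x - cyl_coord a t y\<bar> \<le> rho A a x y"
  by (rule rho_greatest) (auto intro: cyl_coord_chain)

lemma rho_eq_0_if_le_half_powers:
  assumes "x \<in> iwords A" "y \<in> iwords A" "\<And>n. rho A a x y \<le> (1/2) ^ n"
  shows "rho A a x y = 0"
proof (rule ccontr)
  assume "rho A a x y \<noteq> 0"
  then have "0 < rho A a x y" using rho_nonneg[OF assms(1,2)] by simp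
  then obtain n where "(1/2::real) ^ n < rho A a x y" using half_power_less by blast
  then show False using assms(3)[of n] by simp
qed

lemma rho_self: "x \<in> iwords A \<Longrightarrow> rho A a x x = 0"
proof (rule rho_eq_0_if_le_half_powers)
  fix n assume x: "x \<in> iwords A"
  have "rho A a x x \<le> Delta a (pref x n)" using rho_le_Delta icyl_pref[OF x] by blast
  also have "\<dots> \<le> (1/2) ^ n" using Delta_le_half_power[OF set_pref_subset[OF x]] by simp
  finally show "rho A a x x \<le> (1/2) ^ n" .
qed

lemma rho_sym: "rho A a x y = rho A a y x"
proof -
  have "{sum_list (map (Delta a) vs) | vs. is_chain A x y vs} \<subseteq>
      {sum_list (map (Delta a) vs) | vs. is_chain A y x vs}" for x y
  proof
    fix r assume "r \<in> {sum_list (map (Delta a) vs) | vs. is_chain A x y vs}"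
    then obtain vs where "is_chain A x y vs" "r = sum_list (map (Delta a) vs)" by blast
    then show "r \<in> {sum_list (map (Delta a) vs) | vs. is_chain A y x vs}"
      using is_chain_rev by (intro CollectI exI[of _ "rev vs"]) (auto simp: rev_map[symmetric])
  qed
  then have "{sum_list (map (Delta a) vs) | vs. is_chain A x y vs} =
      {sum_list (map (Delta a) vs) | vs. is_chain A y x vs}"
    by (intro subset_antisym)
  then show ?thesis by (simp add: rho_def)
qed

lemma rho_triangle:
  assumes "x \<in> iwords A" "y \<in> iwords A" "z \<in> iwords A"
  shows "rho A a x z \<le> rho A a x y + rho A a y z"
proof (rule field_le_epsilon)
  fix e :: real assume e: "0 < e"
  have near_inf: "\<exists>vs. is_chain A p q vs \<and> sum_list (map (Delta a) vs) < rho A a p q + e/2"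
    if "p \<in> iwords A" "q \<in> iwords A" for p q
  proof -
    have "is_chain A p q [[]]" using that by (auto simp: is_chain_def allfwords_iff)
    then have "{sum_list (map (Delta a) vs) | vs. is_chain A p q vs} \<noteq> {}" by blast
    from cInf_lessD[OF this, of "rho A a p q + e/2"] e show ?thesis by (auto simp: rho_def)
  qed
  obtain vs ws where "is_chain A x y vs" "sum_list (map (Delta a) vs) < rho A a x y + e/2"
    "is_chain A y z ws" "sum_list (map (Delta a) ws) < rho A a y z + e/2"
    using near_inf[OF assms(1,2)] near_inf[OF assms(2,3)] by blast
  moreover from this have "rho A a x z \<le> sum_list (map (Delta a) (vs @ ws))"
    by (intro rho_le_chain is_chain_append)
  ultimately show "rho A a x z \<le> rho A a x y + rho A a y z + e" by simp
qed

lemma rho_junction: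
  assumes s: "set s \<subseteq> A" and c: "c \<in> A" "c \<noteq> 1"
  shows "rho A a (junction_left s) (junction_right s c) = 0"
proof (rule rho_eq_0_if_le_half_powers)
  show jl: "junction_left s \<in> iwords A" and jr: "junction_right s c \<in> iwords A"
    using s c one_in two_in
    by (auto simp: junction_left_def junction_right_def intro!: prepend_iwords const_word_iwords)
  fix n
  define v1 where "v1 = s @ 1 # replicate n 2"
  define v2 where "v2 = s @ c # replicate n 1"
  have "junction_left s \<in> icyl A v1" "junction_right s c \<in> icyl A v2"
    using jl jr junction_left_nth[of _ s n] junction_right_nth[of _ s n c]
    by (simp_all add: icyl_iff v1_def v2_def)
  moreover have "wedge A v1 v2 \<noteq> {}"
    using junction_left_wedge1[OF assms] by (auto simp: wedge_def v1_def v2_def)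
  ultimately have "is_chain A (junction_left s) (junction_right s c) [v1, v2]"
    by (auto simp: is_chain_def allfwords_iff less_Suc_eq dest: set_subset_if_icyl)
  then have "rho A a (junction_left s) (junction_right s c) \<le> Delta a v1 + Delta a v2"
    using rho_le_chain by fastforce
  also have "\<dots> = Delta a s * (1/2) ^ n * (1/2 + a c)"
    by (simp add: v1_def v2_def Delta_append Delta_replicate algebra_simps)
  also have "\<dots> \<le> 1 * (1/2) ^ n * 1"
    using Delta_nonneg[OF s] Delta_le_1[OF s] a_le_half[OF c(1)] a_pos[OF c(1)]
    by (intro mult_mono) auto
  finally show "rho A a (junction_left s) (junction_right s c) \<le> (1/2) ^ n" by simp
qed

end

section \<open>Covering balls by cylinders\<close>

text \<open>The cells
  in junction_cells A a t r are those of the branches t c next to the junction point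
  t 1 2 2 2 ... = t c 1 1 1 ...\<close>

definition cut_len :: "(nat \<Rightarrow> real) \<Rightarrow> nat list \<Rightarrow> real \<Rightarrow> nat" where
  "cut_len a q r = (LEAST b. Delta a q * (1/2) ^ b \<le> 2 * r)"

definition end_cell :: "(nat \<Rightarrow> real) \<Rightarrow> nat list \<Rightarrow> nat \<Rightarrow> real \<Rightarrow> nat list" where
  "end_cell a q e r = q @ replicate (cut_len a q r) e"

definition junction_cells :: "nat set \<Rightarrow> (nat \<Rightarrow> real) \<Rightarrow> nat list \<Rightarrow> real \<Rightarrow> nat list set" where
  "junction_cells A a t r =
     (\<lambda>c. if c = 1 then end_cell a (t @ [1]) 2 r else end_cell a (t @ [c]) 1 r) ` A"

lemma finite_junction_cells:
  "finite A \<Longrightarrow> finite (junction_cells A a t r) \<and> card (junction_cells A a t r) \<le> card A"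
  unfolding junction_cells_def by (intro conjI finite_imageI card_image_le)

lemma replicate_last_decomp:
  "(\<forall>x\<in>set u. x = e) \<or> (\<exists>t c i. c \<noteq> e \<and> u = t @ c # replicate i e)"
proof (induction u rule: rev_induct)
  case (snoc x u)
  show ?case
  proof (cases "x = e")
    case False
    then have "x \<noteq> e \<and> u @ [x] = u @ x # replicate 0 e" by simp
    then show ?thesis by blast
  next
    case True
    from snoc show ?thesis
    proof
      assume "\<exists>t c i. c \<noteq> e \<and> u = t @ c # replicate i e"
      then obtain t c i where "c \<noteq> e \<and> u @ [x] = t @ c # replicate (Suc i) e"
        using True by (auto simp: replicate_append_same)
      then show ?thesis by blast
    qed (use True in simp)
  qed
qed simp

context weighted_alphabet
begin

lemma rho_const_tail_lower:
  assumes y: "y \<in> iwords A" and w: "set w \<subseteq> A" and pre: "\<forall>i<length w. y i = w ! i"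
    and leave: "y (length w) \<noteq> e" and e: "e \<in> {1, 2}"
  shows "Delta a w / 2 \<le> rho A a y (prepend w (const_word e))"
proof -
  define y' where "y' = wdrop (length w) y"
  have D: "0 \<le> Delta a w" by (rule Delta_nonneg[OF w])
  have z: "prepend w (const_word e) \<in> iwords A"
    using e one_in two_in by (auto intro!: prepend_iwords[OF w] const_word_iwords)
  have "1/2 \<le> \<bar>arc_coord y' - arc_coord (const_word e)\<bar>"
    using leave e arc_coord_nonneg[of "wtl y'"] arc_coord_le_1[of "wtl y'"]
    by (subst arc_coord_rec) (auto simp: y'_def wdrop_def)
  then have "Delta a w / 2 \<le> Delta a w * \<bar>arc_coord y' - arc_coord (const_word e)\<bar>"
    using mult_left_mono[OF _ D] by fastforce
  also have "\<dots> = \<bar>cyl_coord a w y - cyl_coord a w (prepend w (const_word e))\<bar>"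
    using cyl_coord_prepend[of a w y'] prepend_wdrop[OF pre]
    by (simp add: y'_def cyl_coord_prepend abs_mult abs_of_nonneg[OF D] right_diff_distrib[symmetric])
  also have "\<dots> \<le> rho A a y (prepend w (const_word e))"
    by (rule cyl_coord_lipschitz[OF w y z])
  finally show ?thesis .
qed

lemma rho_const_tail_lower_replicate:
  assumes y: "y \<in> iwords A" and q: "set q \<subseteq> A" and pre: "\<forall>i<length q. y i = q ! i"
    and leave: "\<not> (\<forall>i<length q + b. y i = (q @ replicate b e) ! i)" and e: "e \<in> {1, 2}"
  shows "Delta a q * (1/2) ^ b \<le> rho A a y (prepend q (const_word e))"
  using leave
proof (induction b)
  case 0
  then show ?case using pre by simp
next
  case (Suc b)
  show ?case
  proof (cases "\<forall>i<length q + b. y i = (q @ replicate b e) ! i")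
    case True
    define w where "w = q @ replicate b e"
    have "y (length w) \<noteq> e"
    proof
      assume "y (length w) = e"
      then have "\<forall>i<length q + Suc b. y i = (q @ replicate (Suc b) e) ! i"
        using True by (auto simp: w_def nth_append less_Suc_eq replicate_append_same[symmetric])
      then show False using Suc.prems by simp
    qed
    then have "Delta a w / 2 \<le> rho A a y (prepend w (const_word e))"
      using True q e one_in two_in by (intro rho_const_tail_lower[OF y]) (auto simp: w_def)
    then show ?thesis
      using e by (simp add: w_def prepend_append prepend_replicate_const_word Delta_append
          Delta_replicate)
  next
    case False
    then have "Delta a q * (1/2) ^ b \<le> rho A a y (prepend q (const_word e))" by (rule Suc.IH)
    moreover have "Delta a q * (1/2) ^ Suc b \<le> Delta a q * (1/2) ^ b"
      using Delta_nonneg[OF q] by (intro mult_left_mono) (auto simp: power_decreasing)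
    ultimately show ?thesis by linarith
  qed
qed

lemma cut_len_le:
  assumes "set q \<subseteq> A" "0 < r"
  shows "Delta a q * (1/2) ^ cut_len a q r \<le> 2 * r"
proof -
  obtain n where n: "(1/2::real) ^ n < 2 * r" using half_power_less[of "2 * r" 0] assms(2) by auto
  have "Delta a q * (1/2) ^ n \<le> 1 * (1/2) ^ n"
    using Delta_le_1[OF assms(1)] by (intro mult_right_mono) auto
  then have "Delta a q * (1/2) ^ n \<le> 2 * r" using n by linarith
  then show ?thesis unfolding cut_len_def by (rule LeastI)
qed

lemma cut_len_gt: "0 < cut_len a q r \<Longrightarrow> r < Delta a q * (1/2) ^ cut_len a q r"
proof -
  assume "0 < cut_len a q r"
  then obtain b where b: "cut_len a q r = Suc b" using gr0_conv_Suc by blast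
  then have "\<not> Delta a q * (1/2) ^ b \<le> 2 * r"
    unfolding cut_len_def by (metis Least_le Suc_n_not_le_n)
  then show ?thesis using b by simp
qed

lemma end_cell_Delta_le: "set q \<subseteq> A \<Longrightarrow> 0 < r \<Longrightarrow> e \<in> {1, 2} \<Longrightarrow> Delta a (end_cell a q e r) \<le> 2 * r"
  using cut_len_le by (auto simp: end_cell_def Delta_append Delta_replicate)

lemma end_cell_set: "set q \<subseteq> A \<Longrightarrow> e \<in> {1, 2} \<Longrightarrow> set (end_cell a q e r) \<subseteq> A"
  using one_in two_in by (auto simp: end_cell_def)

lemma icyl_end_cell:
  assumes q: "set q \<subseteq> A" and e: "e \<in> {1, 2}"
    and y: "y \<in> icyl A q" and near: "rho A a y (prepend q (const_word e)) < r"
  shows "y \<in> icyl A (end_cell a q e r)"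
proof (rule ccontr)
  have yi: "y \<in> iwords A" and pre: "\<forall>i<length q. y i = q ! i" using y by (auto simp: icyl_iff)
  assume "y \<notin> icyl A (end_cell a q e r)"
  then have leave: "\<not> (\<forall>i<length q + cut_len a q r. y i = (q @ replicate (cut_len a q r) e) ! i)"
    using yi by (simp add: icyl_iff end_cell_def)
  with pre have "0 < cut_len a q r" by (cases "cut_len a q r") auto
  then show False
    using rho_const_tail_lower_replicate[OF yi q pre leave e] cut_len_gt[of q r] near by linarith
qed

lemma junction_cells_cover:
  assumes t: "set t \<subseteq> A" and r: "0 < r" and big: "2 * r \<le> Delta a t"
    and y: "y \<in> iwords A" and near: "rho A a y (junction_left t) < r"
  shows "\<exists>v\<in>junction_cells A a t r. y \<in> icyl A v"
proof -
  have jl: "junction_left t \<in> iwords A"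
    using t one_in two_in by (auto simp: junction_left_def intro!: prepend_iwords const_word_iwords)
  have pre: "\<forall>i<length t. y i = t ! i"
  proof (rule ccontr)
    assume "\<not> (\<forall>i<length t. y i = t ! i)"
    then have "cyl_coord a t y = 0 \<or> cyl_coord a t y = Delta a t" by (rule cyl_coord_outside)
    then show False
      using cyl_coord_lipschitz[OF t y jl] cyl_coord_junction_left_self[of a t] big near by auto
  qed
  define c where "c = y (length t)"
  have c: "c \<in> A" using y by (simp add: c_def iwords_iff)
  have yc: "y \<in> icyl A (t @ [c])"
    using y pre by (auto simp: icyl_iff c_def nth_append less_Suc_eq)
  show ?thesis
  proof (cases "c = 1")
    case True
    then have "y \<in> icyl A (end_cell a (t @ [1]) 2 r)"
      using t one_in yc near by (intro icyl_end_cell) (auto simp: junction_left_def)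
    then show ?thesis using True c by (auto simp: junction_cells_def)
  next
    case False
    have jr: "junction_right t c \<in> iwords A"
      using t c one_in by (auto simp: junction_right_def intro!: prepend_iwords const_word_iwords)
    have "rho A a y (junction_right t c)
        \<le> rho A a y (junction_left t) + rho A a (junction_left t) (junction_right t c)"
      by (rule rho_triangle[OF y jl jr])
    then have "rho A a y (junction_right t c) < r" using rho_junction[OF t c False] near by simp
    then have "y \<in> icyl A (end_cell a (t @ [c]) 1 r)"
      using t c yc by (intro icyl_end_cell) (auto simp: junction_right_def)
    then show ?thesis using False c by (auto simp: junction_cells_def)
  qed
qed

lemma junction_cells_small:
  assumes "set t \<subseteq> A" "0 < r" "v \<in> junction_cells A a t r"
  shows "set v \<subseteq> A \<and> Delta a v \<le> 2 * r"
proof -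
  obtain c where c: "c \<in> A"
    "v = (if c = 1 then end_cell a (t @ [1]) 2 r else end_cell a (t @ [c]) 1 r)"
    using assms(3) by (auto simp: junction_cells_def)
  have "set (t @ [c]) \<subseteq> A" using assms(1) c(1) by simp
  then show ?thesis using c assms(2) end_cell_Delta_le end_cell_set by (cases "c = 1") auto
qed

end

context weighted_alphabet
begin

text \<open>A word y of the r-ball around x that leaves the cylinder of u (with Delta a u \<ge> 8 r) is
  sent by cyl_coord a u to one end of the arc; then x, and hence y, lies close to the
  corresponding end u e e e ... of u.\<close>

lemma exit_side_end_cell:
  assumes u: "set u \<subseteq> A" and xu: "x \<in> icyl A u" and big: "8 * r \<le> Delta a u" and r: "0 < r"
    and y: "y \<in> iwords A" and near: "rho A a x y < r" and e: "e \<in> {1, 2}"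
    and exit: "cyl_coord a u y = (if e = 1 then 0 else Delta a u)"
  shows "x \<in> icyl A (end_cell a u e r)"
proof -
  have xi: "x \<in> iwords A" and pre: "\<forall>i<length u. x i = u ! i" using xu by (auto simp: icyl_iff)
  define x' where "x' = wdrop (length u) x"
  have "x = prepend u x'" unfolding x'_def by (rule prepend_wdrop[OF pre])
  then have cx: "cyl_coord a u x = Delta a u * arc_coord x'" by (simp add: cyl_coord_prepend)
  have close: "\<bar>cyl_coord a u x - cyl_coord a u y\<bar> < r"
    using cyl_coord_lipschitz[OF u xi y] near by linarith
  define j where "j = cut_len a u r"
  have D: "0 < Delta a u" using big r by linarith
  have "0 < j" using cut_len_le[OF u r] big r by (cases j) (auto simp: j_def)
  then have j: "r < Delta a u * (1/2) ^ j" using cut_len_gt by (simp add: j_def)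
  have tail: "\<forall>i<j. x' i = e"
  proof (cases "e = 1")
    case True
    then have "Delta a u * arc_coord x' < Delta a u * (1/2) ^ j" using close cx exit j by simp
    then show ?thesis using arc_coord_small_imp_ones True D by simp
  next
    case False
    then have "Delta a u * (1 - (1/2) ^ j) < Delta a u * arc_coord x'"
      using close cx exit j e by (simp add: algebra_simps)
    then show ?thesis using arc_coord_large_imp_twos False e D by simp
  qed
  have "\<forall>i<length (end_cell a u e r). x i = end_cell a u e r ! i"
  proof (intro allI impI)
    fix i assume "i < length (end_cell a u e r)"
    then show "x i = end_cell a u e r ! i"
      using pre tail[rule_format, of "i - length u"]
      by (cases "i < length u") (auto simp: end_cell_def j_def nth_append x'_def wdrop_def)
  qed
  then show ?thesis using xi by (simp add: icyl_iff)
qed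

lemma exit_near_const_tail:
  assumes u: "set u \<subseteq> A" and xu: "x \<in> icyl A u" and big: "8 * r \<le> Delta a u" and r: "0 < r"
    and y: "y \<in> iwords A" and near: "rho A a x y < r" and e: "e \<in> {1, 2}"
    and exit: "cyl_coord a u y = (if e = 1 then 0 else Delta a u)"
  shows "rho A a y (prepend u (const_word e)) < 3 * r"
proof -
  have "e \<in> A" using e one_in two_in by auto
  then have "prepend u (const_word e) \<in> icyl A (end_cell a u e r)"
    using prepend_icyl[of u "replicate (cut_len a u r) e" A "const_word e"] u const_word_iwords[of e A]
    by (simp add: end_cell_def prepend_replicate_const_word subset_code(1))
  then have "rho A a x (prepend u (const_word e)) \<le> 2 * r"
    using rho_le_Delta[OF exit_side_end_cell[OF assms]] end_cell_Delta_le[OF u r e] by fastforce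
  moreover have "rho A a y (prepend u (const_word e))
      \<le> rho A a y x + rho A a x (prepend u (const_word e))"
    using rho_triangle[OF y _ ] xu \<open>prepend u (const_word e) \<in> icyl A _\<close> by (simp add: icyl_iff)
  ultimately show ?thesis using near rho_sym[of x y] by linarith
qed

lemma no_exit_near_const_prefix:
  assumes e: "e \<in> {1, 2}" and y: "y \<in> iwords A" and yu: "y \<notin> icyl A (replicate k e)"
    and big: "8 * r \<le> Delta a (replicate k e)" and r: "0 < r"
    and near: "rho A a y (prepend (replicate k e) (const_word e)) < 3 * r"
  shows False
proof -
  have leave: "\<not> (\<forall>i<length [] + k. y i = ([] @ replicate k e) ! i)"
    using yu y by (simp add: icyl_iff)
  have "Delta a [] * (1/2) ^ k \<le> rho A a y (prepend [] (const_word e))"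
    using rho_const_tail_lower_replicate[OF y _ _ leave e] by simp
  then show False using big near r e by (simp add: prepend_replicate_const_word Delta_replicate)
qed

lemma exit_via_junction_right:
  assumes u: "set (t @ c # replicate i 1) \<subseteq> A" and c: "c \<noteq> 1"
    and y: "y \<in> iwords A" and big: "8 * r \<le> Delta a (t @ c # replicate i 1)" and r: "0 < r"
    and near: "rho A a y (prepend (t @ c # replicate i 1) (const_word 1)) < 3 * r"
  shows "\<exists>v\<in>junction_cells A a t (3 * r). y \<in> icyl A v"
proof -
  have t: "set t \<subseteq> A" and cA: "c \<in> A" using u by auto
  have jl: "junction_left t \<in> iwords A" and jr: "junction_right t c \<in> iwords A"
    using t cA one_in two_in
    by (auto simp: junction_left_def junction_right_def intro!: prepend_iwords const_word_iwords)
  have "prepend (t @ c # replicate i 1) (const_word 1) = junction_right t c"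
    using prepend_append[of t "c # replicate i 1"] prepend_append[of "[c]" "replicate i 1"]
    by (simp add: junction_right_def prepend_append prepend_replicate_const_word)
  then have "rho A a y (junction_right t c) < 3 * r" using near by simp
  moreover have "rho A a y (junction_left t)
      \<le> rho A a y (junction_right t c) + rho A a (junction_right t c) (junction_left t)"
    by (rule rho_triangle[OF y jr jl])
  ultimately have "rho A a y (junction_left t) < 3 * r"
    using rho_junction[OF t cA c] rho_sym by simp
  moreover have "2 * (3 * r) \<le> Delta a t"
    using Delta_append_le[of t "c # replicate i 1"] u big r by simp
  ultimately show ?thesis using junction_cells_cover[OF t _ _ y] r by simp
qed

lemma exit_via_junction_left:
  assumes u: "set (t @ 1 # replicate i 2) \<subseteq> A"
    and y: "y \<in> iwords A" and big: "8 * r \<le> Delta a (t @ 1 # replicate i 2)" and r: "0 < r"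
    and near: "rho A a y (prepend (t @ 1 # replicate i 2) (const_word 2)) < 3 * r"
  shows "\<exists>v\<in>junction_cells A a t (3 * r). y \<in> icyl A v"
proof -
  have t: "set t \<subseteq> A" using u by auto
  have "prepend (t @ 1 # replicate i 2) (const_word 2) = junction_left t"
    using prepend_append[of t "1 # replicate i 2"] prepend_append[of "[1]" "replicate i 2"]
    by (simp add: junction_left_def prepend_append prepend_replicate_const_word)
  then have "rho A a y (junction_left t) < 3 * r" using near by simp
  moreover have "2 * (3 * r) \<le> Delta a t"
    using Delta_append_le[of t "1 # replicate i 2"] u big r by simp
  ultimately show ?thesis using junction_cells_cover[OF t _ _ y] r by simp
qed

lemma no_exit_near_exotic_end:
  assumes u: "set (t @ c # replicate i 2) \<subseteq> A" and c: "c \<notin> {1, 2}"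
    and y: "y \<in> iwords A" and yu: "y \<notin> icyl A (t @ c # replicate i 2)"
    and big: "8 * r \<le> Delta a (t @ c # replicate i 2)" and r: "0 < r"
    and near: "rho A a y (prepend (t @ c # replicate i 2) (const_word 2)) < 3 * r"
  shows False
proof -
  define q where "q = t @ [c]"
  have q: "set q \<subseteq> A" using u by (auto simp: q_def)
  have uq: "t @ c # replicate i 2 = q @ replicate i 2" by (simp add: q_def)
  have tail: "prepend (q @ replicate i 2) (const_word 2) = prepend q (const_word 2)"
    by (simp add: prepend_append prepend_replicate_const_word)
  have Dq: "Delta a (q @ replicate i 2) = Delta a q * (1/2) ^ i"
    by (simp add: Delta_append Delta_replicate)
  show False
  proof (cases "\<forall>j<length q. y j = q ! j")
    case True
    have "\<not> (\<forall>j<length q + i. y j = (q @ replicate i 2) ! j)"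
      using yu y uq by (simp add: icyl_iff)
    then have "Delta a q * (1/2) ^ i \<le> rho A a y (prepend q (const_word 2))"
      by (rule rho_const_tail_lower_replicate[OF y q True]) simp
    then show False using big near r uq tail Dq by simp
  next
    case False
    then have "cyl_coord a q y = 0"
      using cyl_coord_outside_last_exotic[OF c] by (simp add: q_def)
    moreover have "prepend q (const_word 2) \<in> iwords A"
      using q two_in by (intro prepend_iwords const_word_iwords)
    ultimately have "Delta a q \<le> rho A a y (prepend q (const_word 2))"
      using cyl_coord_lipschitz[OF q y] by (fastforce simp: cyl_coord_prepend)
    moreover have "Delta a (q @ replicate i 2) \<le> Delta a q"
      using Delta_append_le[of q "replicate i 2"] u uq by simp
    ultimately show False using big near r uq tail by simp
  qed
qed

end

context weighted_alphabet
begin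

lemma Delta_pref_scale:
  assumes amin: "0 < amin" "\<forall>c\<in>A. amin \<le> a c" and x: "x \<in> iwords A" and \<rho>: "0 < \<rho>" "\<rho> \<le> 1"
  obtains k where "\<rho> \<le> Delta a (pref x k)" "Delta a (pref x k) * amin < \<rho>"
    "\<rho> * amin \<le> Delta a (pref x (Suc k))" "Delta a (pref x (Suc k)) < \<rho>"
proof -
  define n where "n = (LEAST n. Delta a (pref x n) < \<rho>)"
  have n: "Delta a (pref x n) < \<rho>"
    unfolding n_def by (rule LeastI_ex) (use Delta_pref_less[OF x \<rho>(1)] in blast)
  then have "n \<noteq> 0" using \<rho>(2) by (cases n) (simp_all add: pref_def)
  then obtain k where k: "n = Suc k" using not0_implies_Suc by blast
  then have "k < n" by simp
  then have "\<not> Delta a (pref x k) < \<rho>" unfolding n_def by (rule not_less_Least)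
  then have k_big: "\<rho> \<le> Delta a (pref x k)" by simp
  have "amin \<le> a (x k)" using amin(2) x by (simp add: iwords_iff)
  then have "Delta a (pref x k) * amin \<le> Delta a (pref x (Suc k))"
    using Delta_nonneg[OF set_pref_subset[OF x]] by (simp add: Delta_pref_Suc mult_left_mono)
  moreover have "\<rho> * amin \<le> Delta a (pref x k) * amin"
    using k_big amin(1) by (simp add: mult_right_mono)
  ultimately show ?thesis using that k_big n k by simp
qed

lemma exits_at_1_covered:
  assumes fin: "finite A" and u: "set u \<subseteq> A" and xu: "x \<in> icyl A u"
    and big: "8 * r \<le> Delta a u" and r: "0 < r"
  obtains V where "finite V" "card V \<le> card A" "\<forall>v\<in>V. set v \<subseteq> A \<and> Delta a v \<le> 6 * r"
    "\<And>y. y \<in> iwords A \<Longrightarrow> y \<notin> icyl A u \<Longrightarrow> rho A a x y < r \<Longrightarrow> cyl_coord a u y = 0 \<Longrightarrow>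
       \<exists>v\<in>V. y \<in> icyl A v"
proof -
  have near: "rho A a y (prepend u (const_word 1)) < 3 * r"
    if "y \<in> iwords A" "rho A a x y < r" "cyl_coord a u y = 0" for y
    by (rule exit_near_const_tail[OF u xu big r that(1,2)]) (use that(3) in auto)
  consider "\<forall>z\<in>set u. z = 1" | t c i where "c \<noteq> 1" "u = t @ c # replicate i 1"
    using replicate_last_decomp[of u 1] by blast
  then show ?thesis
  proof cases
    case 1
    then have "u = replicate (length u) 1" by (simp add: list_eq_iff_nth_eq)
    then show ?thesis
      using that[of "{}"] near no_exit_near_const_prefix[of 1 _ "length u" r] big r by force
  next
    case (2 t c i)
    show ?thesis
    proof (rule that[of "junction_cells A a t (3 * r)"])
      show "finite (junction_cells A a t (3 * r))" "card (junction_cells A a t (3 * r)) \<le> card A"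
        using finite_junction_cells[OF fin] by blast+
      show "\<forall>v\<in>junction_cells A a t (3 * r). set v \<subseteq> A \<and> Delta a v \<le> 6 * r"
        using junction_cells_small[of t "3 * r"] u 2 r by auto
    qed (use near exit_via_junction_right[of t c i _ r] u 2 big r in auto)
  qed
qed

lemma exits_at_2_covered:
  assumes fin: "finite A" and u: "set u \<subseteq> A" and xu: "x \<in> icyl A u"
    and big: "8 * r \<le> Delta a u" and r: "0 < r"
  obtains V where "finite V" "card V \<le> card A" "\<forall>v\<in>V. set v \<subseteq> A \<and> Delta a v \<le> 6 * r"
    "\<And>y. y \<in> iwords A \<Longrightarrow> y \<notin> icyl A u \<Longrightarrow> rho A a x y < r \<Longrightarrow> cyl_coord a u y = Delta a u \<Longrightarrow>
       \<exists>v\<in>V. y \<in> icyl A v"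
proof -
  have near: "rho A a y (prepend u (const_word 2)) < 3 * r"
    if "y \<in> iwords A" "rho A a x y < r" "cyl_coord a u y = Delta a u" for y
    by (rule exit_near_const_tail[OF u xu big r that(1,2)]) (use that(3) in auto)
  consider "\<forall>z\<in>set u. z = 2" | t i where "u = t @ 1 # replicate i 2"
    | t c i where "c \<notin> {1, 2}" "u = t @ c # replicate i 2"
    using replicate_last_decomp[of u 2] by blast
  then show ?thesis
  proof cases
    case 1
    then have "u = replicate (length u) 2" by (simp add: list_eq_iff_nth_eq)
    then show ?thesis
      using that[of "{}"] near no_exit_near_const_prefix[of 2 _ "length u" r] big r by force
  next
    case (2 t i)
    show ?thesis
    proof (rule that[of "junction_cells A a t (3 * r)"])
      show "finite (junction_cells A a t (3 * r))" "card (junction_cells A a t (3 * r)) \<le> card A"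
        using finite_junction_cells[OF fin] by blast+
      show "\<forall>v\<in>junction_cells A a t (3 * r). set v \<subseteq> A \<and> Delta a v \<le> 6 * r"
        using junction_cells_small[of t "3 * r"] u 2 r by auto
    qed (use near exit_via_junction_left[of t i _ r] u 2 big r in auto)
  next
    case (3 t c i)
    then show ?thesis
      using that[of "{}"] near no_exit_near_exotic_end[of t c i _ r] u big r by force
  qed
qed

text \<open>The ball of radius r is covered by the cylinder of the longest prefix u of its centre
  with Delta a u \<ge> 8 r, together with the cells near the two ends of u.\<close>

lemma ball_covered_by_cylinders:
  assumes fin: "finite A" and amin: "0 < amin" "amin \<le> 1" "\<forall>c\<in>A. amin \<le> a c"
    and x: "x \<in> iwords A" and r: "0 < r"
  obtains V where "finite V" "card V \<le> 2 * card A + 1"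
    "\<forall>v\<in>V. set v \<subseteq> A \<and> Delta a v \<le> 8 * r / amin"
    "{y \<in> iwords A. rho A a x y < r} \<subseteq> (\<Union>v\<in>V. icyl A v)"
proof (cases "1 < 8 * r")
  case True
  have "1 \<le> 8 * r / amin" using True amin r by (simp add: le_divide_eq)
  then show ?thesis using that[of "{[]}"] by auto
next
  case False
  have r_le: "6 * r \<le> 8 * r / amin" using amin r by (simp add: le_divide_eq)
  obtain k where k: "8 * r \<le> Delta a (pref x k)" "Delta a (pref x k) * amin < 8 * r"
    using Delta_pref_scale[OF amin(1,3) x, of "8 * r"] False r by auto
  define u where "u = pref x k"
  have u: "set u \<subseteq> A" "x \<in> icyl A u" "8 * r \<le> Delta a u"
    using set_pref_subset[OF x] icyl_pref[OF x] k(1) by (auto simp: u_def)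
  have small: "Delta a u \<le> 8 * r / amin" using k(2) amin(1) by (simp add: u_def le_divide_eq)
  obtain V1 where V1: "finite V1" "card V1 \<le> card A" "\<forall>v\<in>V1. set v \<subseteq> A \<and> Delta a v \<le> 6 * r"
    "\<And>y. y \<in> iwords A \<Longrightarrow> y \<notin> icyl A u \<Longrightarrow> rho A a x y < r \<Longrightarrow> cyl_coord a u y = 0 \<Longrightarrow>
       \<exists>v\<in>V1. y \<in> icyl A v"
    using exits_at_1_covered[OF fin u r] by blast
  obtain V2 where V2: "finite V2" "card V2 \<le> card A" "\<forall>v\<in>V2. set v \<subseteq> A \<and> Delta a v \<le> 6 * r"
    "\<And>y. y \<in> iwords A \<Longrightarrow> y \<notin> icyl A u \<Longrightarrow> rho A a x y < r \<Longrightarrow> cyl_coord a u y = Delta a u \<Longrightarrow>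
       \<exists>v\<in>V2. y \<in> icyl A v"
    using exits_at_2_covered[OF fin u r] by blast
  show ?thesis
  proof (rule that[of "insert u (V1 \<union> V2)"])
    show "finite (insert u (V1 \<union> V2))" using V1(1) V2(1) by simp
    show "card (insert u (V1 \<union> V2)) \<le> 2 * card A + 1"
    proof -
      have "card (insert u (V1 \<union> V2)) \<le> Suc (card (V1 \<union> V2))"
        using V1(1) V2(1) by (simp add: card_insert_if)
      then show ?thesis using card_Un_le[of V1 V2] V1(2) V2(2) by linarith
    qed
    show "\<forall>v\<in>insert u (V1 \<union> V2). set v \<subseteq> A \<and> Delta a v \<le> 8 * r / amin"
      using V1(3) V2(3) u(1) small r_le by force
    show "{y \<in> iwords A. rho A a x y < r} \<subseteq> (\<Union>v\<in>insert u (V1 \<union> V2). icyl A v)"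
    proof clarify
      fix y assume y: "y \<in> iwords A" "rho A a x y < r"
      show "y \<in> (\<Union>v\<in>insert u (V1 \<union> V2). icyl A v)"
      proof (cases "y \<in> icyl A u")
        case False
        then have "cyl_coord a u y = 0 \<or> cyl_coord a u y = Delta a u"
          using y by (intro cyl_coord_outside) (simp add: icyl_iff)
        then show ?thesis using V1(4)[OF y(1) False y(2)] V2(4)[OF y(1) False y(2)] by blast
      qed blast
    qed
  qed
qed

end

section \<open>Bernoulli measures on infinite words\<close>

lemma pmf_with_weights:
  fixes f :: "nat \<Rightarrow> real"
  assumes nonneg: "\<And>i. 0 \<le> f i" and total: "f sums 1"
  obtains p where "\<And>i. pmf p i = f i"
proof -
  have "(\<integral>\<^sup>+x. ennreal (f x) \<partial>count_space UNIV) = (\<Sum>i. ennreal (f i))"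
    by (rule nn_integral_count_space_nat)
  also have "\<dots> = ennreal (\<Sum>i. f i)"
    by (rule suminf_ennreal2[OF nonneg sums_summable[OF total]])
  also have "\<dots> = 1" using sums_unique[OF total] by simp
  finally show ?thesis using that pmf_embed_pmf[of f] nonneg by blast
qed

definition bernoulli :: "nat pmf \<Rightarrow> (nat \<Rightarrow> nat) measure" where
  "bernoulli p = PiM UNIV (\<lambda>_. measure_pmf p)"

definition cylinder :: "nat list \<Rightarrow> (nat \<Rightarrow> nat) set" where
  "cylinder v = {w. \<forall>i<length v. w i = v ! i}"

lemma space_bernoulli [simp]: "space (bernoulli p) = UNIV"
  by (simp add: bernoulli_def space_PiM)

lemma prob_space_bernoulli: "prob_space (bernoulli p)"
  unfolding bernoulli_def by (rule prob_space_PiM) (rule measure_pmf.prob_space_axioms)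

lemma cylinder_eq_prod_emb:
  "cylinder v = prod_emb UNIV (\<lambda>_. measure_pmf p) {..<length v} (\<Pi>\<^sub>E i\<in>{..<length v}. {v ! i})"
  unfolding cylinder_def prod_emb_def by (simp add: restrict_PiE_iff set_eq_iff Pi_iff) blast

lemma cylinder_sets: "cylinder v \<in> sets (bernoulli p)"
  unfolding cylinder_eq_prod_emb[of v p] bernoulli_def by (rule sets_PiM_I) auto

lemma emeasure_cylinder: "emeasure (bernoulli p) (cylinder v) = ennreal (prod_list (map (pmf p) v))"
proof -
  have "emeasure (bernoulli p) (cylinder v) = (\<Prod>i<length v. emeasure (measure_pmf p) {v ! i})"
    unfolding cylinder_eq_prod_emb[of v p] bernoulli_def
    by (rule emeasure_PiM_emb) (auto intro: measure_pmf.prob_space_axioms)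
  also have "\<dots> = ennreal (\<Prod>i<length v. pmf p (v ! i))"
    by (simp add: emeasure_pmf_single prod_ennreal)
  also have "(\<Prod>i<length v. pmf p (v ! i)) = prod_list (map (pmf p) v)"
    by (simp add: prod.list_conv_set_nth atLeast0LessThan)
  finally show ?thesis .
qed

lemma iwords_sets: "iwords A \<in> sets (bernoulli p)"
proof -
  have "iwords A = (\<Inter>n. {w \<in> space (bernoulli p). w n \<in> A})" by (auto simp: iwords_iff)
  moreover have "{w \<in> space (bernoulli p). w n \<in> A} \<in> sets (bernoulli p)" for n
    unfolding bernoulli_def by (rule sets_Collect_single') auto
  ultimately show ?thesis by auto
qed

lemma AE_iwords: "set_pmf p \<subseteq> A \<Longrightarrow> AE w in bernoulli p. w \<in> iwords A"
proof -
  assume p: "set_pmf p \<subseteq> A"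
  have "AE w in bernoulli p. w n \<in> A" for n
    unfolding bernoulli_def
    by (rule AE_PiM_component) (use p measure_pmf.prob_space_axioms in \<open>auto simp: AE_measure_pmf_iff\<close>)
  then show ?thesis by (simp add: AE_all_countable iwords_iff)
qed

lemma icyl_eq_cylinder_Int: "icyl A v = cylinder v \<inter> iwords A"
  by (auto simp: icyl_iff cylinder_def)

lemma icyl_sets: "icyl A v \<in> sets (bernoulli p)"
  unfolding icyl_eq_cylinder_Int using cylinder_sets iwords_sets by blast

lemma emeasure_icyl:
  assumes "set_pmf p \<subseteq> A"
  shows "emeasure (bernoulli p) (icyl A v) = ennreal (prod_list (map (pmf p) v))"
proof -
  have "emeasure (bernoulli p) (icyl A v) = emeasure (bernoulli p) (cylinder v)"
    by (rule emeasure_eq_AE)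
       (use AE_iwords[OF assms] icyl_sets cylinder_sets in \<open>auto simp: icyl_eq_cylinder_Int\<close>)
  then show ?thesis by (simp add: emeasure_cylinder)
qed

lemma compl_iwords_sets: "UNIV - iwords A \<in> sets (bernoulli p)"
  using sets.compl_sets[OF iwords_sets[of A p]] by simp

lemma emeasure_compl_iwords: "set_pmf p \<subseteq> A \<Longrightarrow> emeasure (bernoulli p) (UNIV - iwords A) = 0"
proof -
  assume "set_pmf p \<subseteq> A"
  moreover have "{w \<in> space (bernoulli p). w \<notin> iwords A} = UNIV - iwords A" by auto
  ultimately show ?thesis
    using AE_iff_measurable[OF compl_iwords_sets[of A p], of "\<lambda>w. w \<in> iwords A"] AE_iwords
    by simp
qed

section \<open>The quotient space and its natural measure\<close>

definition rho_class :: "nat set \<Rightarrow> (nat \<Rightarrow> real) \<Rightarrow> (nat \<Rightarrow> nat) \<Rightarrow> (nat \<Rightarrow> nat) set" where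
  "rho_class A a x = {(x, y). x \<in> iwords A \<and> y \<in> iwords A \<and> rho A a x y = 0} `` {x}"

lemma Tcarrier_eq_image: "Tcarrier A a = rho_class A a ` iwords A"
  by (auto simp: Tcarrier_def quotient_def rho_class_def)

context weighted_alphabet
begin

abbreviation tball :: "(nat \<Rightarrow> nat) set \<Rightarrow> real \<Rightarrow> (nat \<Rightarrow> nat) set set" where
  "tball \<equiv> mball' (Tcarrier A a) (Tdist A a)"

lemma mem_rho_class: "x \<in> iwords A \<Longrightarrow> y \<in> rho_class A a x \<longleftrightarrow> y \<in> iwords A \<and> rho A a x y = 0"
  by (auto simp: rho_class_def)

lemma rho_eq_if_rho_0:
  assumes "x \<in> iwords A" "x' \<in> iwords A" "rho A a x x' = 0" "z \<in> iwords A"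
  shows "rho A a x z = rho A a x' z"
  using rho_triangle[OF assms(1,2,4)] rho_triangle[OF assms(2,1,4)] assms(3) rho_sym[of x' x]
  by simp

lemma some_rho_class:
  assumes "x \<in> iwords A"
  shows "(SOME y. y \<in> rho_class A a x) \<in> iwords A" "rho A a x (SOME y. y \<in> rho_class A a x) = 0"
proof -
  have "x \<in> rho_class A a x" using assms rho_self by (simp add: mem_rho_class)
  then have "(SOME y. y \<in> rho_class A a x) \<in> rho_class A a x" by (rule someI[of "\<lambda>y. y \<in> rho_class A a x"])
  then show "(SOME y. y \<in> rho_class A a x) \<in> iwords A" "rho A a x (SOME y. y \<in> rho_class A a x) = 0"
    using assms by (auto simp: mem_rho_class)
qed

lemma Tdist_rho_class:
  assumes x: "x \<in> iwords A" and y: "y \<in> iwords A"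
  shows "Tdist A a (rho_class A a x) (rho_class A a y) = rho A a x y"
proof -
  let ?x = "SOME x'. x' \<in> rho_class A a x" and ?y = "SOME y'. y' \<in> rho_class A a y"
  have "rho A a ?x ?y = rho A a x ?y"
    using rho_eq_if_rho_0[OF x _ _ some_rho_class(1)[OF y]] some_rho_class[OF x] by simp
  also have "\<dots> = rho A a y x"
    using rho_eq_if_rho_0[OF y _ _ x] some_rho_class[OF y] rho_sym by metis
  finally show ?thesis by (simp add: Tdist_def rho_sym)
qed

lemma Tdist_le_1: "X \<in> Tcarrier A a \<Longrightarrow> Y \<in> Tcarrier A a \<Longrightarrow> Tdist A a X Y \<le> 1"
  by (auto simp: Tcarrier_eq_image Tdist_rho_class rho_le_1)

lemma Tdist_triangle:
  "X \<in> Tcarrier A a \<Longrightarrow> Y \<in> Tcarrier A a \<Longrightarrow> Z \<in> Tcarrier A a \<Longrightarrow>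
    Tdist A a X Z \<le> Tdist A a X Y + Tdist A a Y Z"
  by (auto simp: Tcarrier_eq_image Tdist_rho_class rho_triangle)

lemma mopen_mball:
  assumes X: "X \<in> Tcarrier A a"
  shows "mopen' (Tcarrier A a) (Tdist A a) (tball X r)"
  unfolding mopen'_def
proof (intro conjI ballI)
  show "tball X r \<subseteq> Tcarrier A a" by (auto simp: mball'_def)
  fix Y assume Y: "Y \<in> tball X r"
  have "tball Y (r - Tdist A a X Y) \<subseteq> tball X r"
  proof
    fix Z assume "Z \<in> tball Y (r - Tdist A a X Y)"
    then show "Z \<in> tball X r"
      using Tdist_triangle[OF X, of Y Z] Y by (auto simp: mball'_def)
  qed
  then show "\<exists>e>0. tball Y e \<subseteq> tball X r"
    using Y by (intro exI[of _ "r - Tdist A a X Y"]) (auto simp: mball'_def)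
qed

lemma diam_Tcarrier_le_1: "diam' (Tdist A a) (Tcarrier A a) \<le> 1"
proof (cases "Tcarrier A a = {}")
  case False
  then have "{Tdist A a X Y |X Y. X \<in> Tcarrier A a \<and> Y \<in> Tcarrier A a} \<noteq> {}" by blast
  then have "Sup {Tdist A a X Y |X Y. X \<in> Tcarrier A a \<and> Y \<in> Tcarrier A a} \<le> 1"
    by (rule cSup_least) (use Tdist_le_1 in auto)
  then show ?thesis using False by (simp add: diam'_def)
qed (simp add: diam'_def)

lemma diam_rho_class_icyl:
  assumes v: "set v \<subseteq> A"
  shows "rho_class A a ` icyl A v \<noteq> {}" "diam' (Tdist A a) (rho_class A a ` icyl A v) \<le> Delta a v"
    "0 \<le> diam' (Tdist A a) (rho_class A a ` icyl A v)"
proof -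
  have "prepend v (const_word 1) \<in> icyl A v"
    using prepend_iwords[OF v const_word_iwords[OF one_in]] by (simp add: icyl_iff)
  then show ne: "rho_class A a ` icyl A v \<noteq> {}" by blast
  then have "{Tdist A a X Y |X Y. X \<in> rho_class A a ` icyl A v \<and> Y \<in> rho_class A a ` icyl A v} \<noteq> {}"
    by blast
  then have "Sup {Tdist A a X Y |X Y. X \<in> rho_class A a ` icyl A v \<and> Y \<in> rho_class A a ` icyl A v}
      \<le> Delta a v"
    by (rule cSup_least) (auto simp: Tdist_rho_class icyl_iff rho_le_Delta)
  then show "diam' (Tdist A a) (rho_class A a ` icyl A v) \<le> Delta a v"
    using ne by (simp add: diam'_def)
  have bdd: "bdd_above {Tdist A a X Y |X Y. X \<in> rho_class A a ` icyl A v \<and> Y \<in> rho_class A a ` icyl A v}"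
    by (rule bdd_aboveI[of _ "Delta a v"]) (auto simp: Tdist_rho_class icyl_iff rho_le_Delta)
  obtain x where x: "x \<in> icyl A v" using ne by blast
  then have "Tdist A a (rho_class A a x) (rho_class A a x) \<in>
      {Tdist A a X Y |X Y. X \<in> rho_class A a ` icyl A v \<and> Y \<in> rho_class A a ` icyl A v}"
    by blast
  then have "Tdist A a (rho_class A a x) (rho_class A a x) \<le>
      Sup {Tdist A a X Y |X Y. X \<in> rho_class A a ` icyl A v \<and> Y \<in> rho_class A a ` icyl A v}"
    using bdd by (rule cSup_upper)
  moreover have "Tdist A a (rho_class A a x) (rho_class A a x) = 0"
    using x by (simp add: icyl_iff Tdist_rho_class rho_self)
  ultimately show "0 \<le> diam' (Tdist A a) (rho_class A a ` icyl A v)"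
    using ne by (simp add: diam'_def)
qed

text \<open>Words outside iwords A form a null set for the Bernoulli measures used below; the map
  sends them to an arbitrary point so that it is total.\<close>

definition quot_map :: "(nat \<Rightarrow> nat) \<Rightarrow> (nat \<Rightarrow> nat) set" where
  "quot_map w = rho_class A a (if w \<in> iwords A then w else const_word 1)"

definition quot_measure :: "nat pmf \<Rightarrow> (nat \<Rightarrow> nat) set measure" where
  "quot_measure p = distr (bernoulli p) (sigma (Tcarrier A a) {U. mopen' (Tcarrier A a) (Tdist A a) U})
     quot_map"

lemma open_sets_Pow: "{U. mopen' (Tcarrier A a) (Tdist A a) U} \<subseteq> Pow (Tcarrier A a)"
  by (auto simp: mopen'_def)

lemma quot_map_Tcarrier: "quot_map w \<in> Tcarrier A a"
  using const_word_iwords[OF one_in] by (auto simp: quot_map_def Tcarrier_eq_image)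

lemma quot_map_vimage_open_sets:
  assumes U: "mopen' (Tcarrier A a) (Tdist A a) U"
  shows "quot_map -` U \<in> sets (bernoulli p)"
proof -
  define S where "S = {v. set v \<subseteq> A \<and> icyl A v \<subseteq> {w \<in> iwords A. rho_class A a w \<in> U}}"
  have "{w \<in> iwords A. rho_class A a w \<in> U} \<subseteq> (\<Union>v\<in>S. icyl A v)"
  proof
    fix w assume "w \<in> {w \<in> iwords A. rho_class A a w \<in> U}"
    then have w: "w \<in> iwords A" "rho_class A a w \<in> U" by auto
    obtain r where r: "r > 0" "tball (rho_class A a w) r \<subseteq> U"
      using U w(2) by (auto simp: mopen'_def)
    obtain n where n: "Delta a (pref w n) < r" using Delta_pref_less[OF w(1) r(1)] by blast
    have "icyl A (pref w n) \<subseteq> {w \<in> iwords A. rho_class A a w \<in> U}"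
    proof
      fix w' assume w': "w' \<in> icyl A (pref w n)"
      then have "rho A a w w' < r" using rho_le_Delta[OF icyl_pref[OF w(1)] w'] n by linarith
      then show "w' \<in> {w \<in> iwords A. rho_class A a w \<in> U}"
        using r(2) w' w(1) by (auto simp: mball'_def Tcarrier_eq_image Tdist_rho_class icyl_iff)
    qed
    moreover have "set (pref w n) \<subseteq> A" by (rule set_pref_subset[OF w(1)])
    ultimately show "w \<in> (\<Union>v\<in>S. icyl A v)"
      using icyl_pref[OF w(1)] by (auto simp: S_def)
  qed
  then have "{w \<in> iwords A. rho_class A a w \<in> U} = (\<Union>v\<in>S. icyl A v)"
    by (auto simp: S_def)
  then have inside: "{w \<in> iwords A. rho_class A a w \<in> U} \<in> sets (bernoulli p)"
    by (simp only:) (rule sets.countable_UN, auto intro: icyl_sets)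
  have "quot_map -` U = {w \<in> iwords A. rho_class A a w \<in> U} \<union>
      (if rho_class A a (const_word 1) \<in> U then UNIV - iwords A else {})"
    by (auto simp: quot_map_def split: if_splits)
  then show ?thesis using inside compl_iwords_sets by auto
qed

lemma quot_map_measurable:
  "quot_map \<in> measurable (bernoulli p) (sigma (Tcarrier A a) {U. mopen' (Tcarrier A a) (Tdist A a) U})"
  by (rule measurable_measure_of[OF open_sets_Pow])
     (use quot_map_Tcarrier quot_map_vimage_open_sets in auto)

lemma space_quot_measure: "space (quot_measure p) = Tcarrier A a"
  by (simp add: quot_measure_def open_sets_Pow)

lemma sets_quot_measure: "sets (quot_measure p) = borel_sets' (Tcarrier A a) (Tdist A a)"
  by (simp add: quot_measure_def borel_sets'_def open_sets_Pow)

lemma emeasure_quot_measure_mball: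
  "X \<in> Tcarrier A a \<Longrightarrow> emeasure (quot_measure p) (tball X r) =
    emeasure (bernoulli p) (quot_map -` tball X r)"
proof -
  assume "X \<in> Tcarrier A a"
  then have "tball X r \<in>
      sets (sigma (Tcarrier A a) {U. mopen' (Tcarrier A a) (Tdist A a) U})"
    using mopen_mball by (auto simp: open_sets_Pow intro: sigma_sets.Basic)
  then show ?thesis
    unfolding quot_measure_def by (simp add: emeasure_distr[OF quot_map_measurable])
qed

lemma quot_map_mball_iwords:
  assumes "x \<in> iwords A" "w \<in> iwords A"
  shows "w \<in> quot_map -` tball (rho_class A a x) r \<longleftrightarrow> rho A a x w < r"
  using assms quot_map_Tcarrier[of w] by (simp add: mball'_def quot_map_def Tdist_rho_class)

end

section \<open>Ahlfors regularity for finite alphabets\<close>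

lemma Psi_strict_antimono:
  assumes W: "is_weight a" and m: "1 \<le> m" and st: "s < t"
  shows "Psi m a t < Psi m a s"
  unfolding Psi_def
proof (rule sum_strict_mono)
  fix i assume "i \<in> {1..m}"
  then have "0 < a i" "a i < 1" using weight_pos[OF W] weight_le_half[OF W] by force+
  then show "a i powr t < a i powr s" by (rule powr_less_mono'[OF _ _ st])
qed (use m in auto)

lemma Psi_continuous_on: "is_weight a \<Longrightarrow> continuous_on S (\<lambda>t. Psi m a t)"
  unfolding Psi_def using weight_pos by (intro continuous_intros) force

lemma Psi_eq_1_unique:
  assumes W: "is_weight a" and m: "2 \<le> m"
  shows "\<exists>!s. Psi m a s = 1"
proof (rule ex_ex1I)
  have "Psi m a 0 = real m"
    unfolding Psi_def using weight_pos[OF W] by (simp add: less_imp_neq[symmetric])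
  moreover have "Psi m a (real m) \<le> 1"
  proof -
    have "Psi m a (real m) \<le> (\<Sum>i=1..m. (1/2::real) ^ m)"
      unfolding Psi_def
    proof (rule sum_mono)
      fix i assume "i \<in> {1..m}"
      then have "0 < a i" "a i \<le> 1/2" using weight_pos[OF W] weight_le_half[OF W] by auto
      then show "a i powr real m \<le> (1/2) ^ m" by (simp add: powr_realpow power_mono)
    qed
    also have "\<dots> = real m / 2 ^ m" by (simp add: power_divide)
    also have "\<dots> \<le> 1" using less_exp[of m] by (simp add: of_nat_less_two_power less_imp_le)
    finally show ?thesis .
  qed
  ultimately show "\<exists>s. Psi m a s = 1"
    using IVT2'[of "\<lambda>t. Psi m a t" "real m" 1 0] Psi_continuous_on[OF W] m by force
next
  fix s t assume "Psi m a s = 1" "Psi m a t = 1"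
  then show "s = t" using Psi_strict_antimono[OF W, of m] m by (metis linorder_neqE less_irrefl
        one_le_numeral order_trans)
qed

lemma Psi_eq_1_pos:
  assumes W: "is_weight a" and m: "2 \<le> m" and s: "Psi m a s = 1"
  shows "0 < s"
proof (rule ccontr)
  assume "\<not> 0 < s"
  then have "1 \<le> a i powr s" if "i \<in> {1..m}" for i
  proof -
    have "0 < a i" "a i \<le> 1" using that weight_pos[OF W, of i] weight_le_half[OF W, of i] by auto
    then have "a i powr 0 \<le> a i powr s" using \<open>\<not> 0 < s\<close> by (intro powr_mono') auto
    then show ?thesis using \<open>0 < a i\<close> by simp
  qed
  then have "(\<Sum>i=1..m. 1) \<le> Psi m a s" unfolding Psi_def by (intro sum_mono) auto
  then show False using m s by simp
qed

lemma Psi_sums: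
  assumes "(\<lambda>m. Psi m a s) \<longlonglongrightarrow> L"
  shows "(\<lambda>i. if i \<in> {1..} then a i powr s else 0) sums L"
proof -
  have partial: "(\<Sum>i<Suc n. if i \<in> {1..} then a i powr s else 0) = Psi n a s" for n
    by (induction n) (auto simp: Psi_def)
  have "(\<lambda>n. \<Sum>i<Suc n. if i \<in> {1..} then a i powr s else 0) \<longlonglongrightarrow> L"
    unfolding partial by (rule assms)
  then show ?thesis unfolding sums_def by (rule LIMSEQ_imp_Suc)
qed

context weighted_alphabet
begin

lemma bernoulli_with_cylinder_measure:
  assumes L: "0 < L" and total: "(\<lambda>i. if i \<in> A then a i powr s else 0) sums L"
  obtains p where "set_pmf p \<subseteq> A"
    "\<And>v. set v \<subseteq> A \<Longrightarrow> emeasure (bernoulli p) (icyl A v) = ennreal (Delta a v powr s / L ^ length v)"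
proof -
  define f where "f i = (if i \<in> A then a i powr s else 0) / L" for i
  have "f sums 1" using sums_divide[OF total, of L] L by (simp add: f_def[abs_def])
  moreover have "0 \<le> f i" for i using L by (simp add: f_def)
  ultimately obtain p where p: "\<And>i. pmf p i = f i" using pmf_with_weights by metis
  have "prod_list (map (pmf p) v) = Delta a v powr s / L ^ length v" if "set v \<subseteq> A" for v
    using that
  proof (induction v)
    case (Cons c v)
    then show ?case
      using a_pos[of c] Delta_nonneg[of v] by (simp add: p f_def powr_mult)
  qed simp
  moreover have "set_pmf p \<subseteq> A" using p by (auto simp: set_pmf_eq f_def)
  ultimately show ?thesis using that emeasure_icyl by simp
qed

lemma mball_measure_lower:
  assumes p: "set_pmf p \<subseteq> A" "\<And>v. set v \<subseteq> A \<Longrightarrow> emeasure (bernoulli p) (icyl A v) = ennreal (Delta a v powr s)"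
    and s: "0 \<le> s" and amin: "0 < amin" "\<forall>c\<in>A. amin \<le> a c"
    and X: "X \<in> Tcarrier A a" and r: "0 < r" "r \<le> 1"
  shows "ennreal ((r * amin) powr s) \<le> emeasure (quot_measure p) (tball X r)"
proof -
  obtain x where x: "x \<in> iwords A" "X = rho_class A a x" using X by (auto simp: Tcarrier_eq_image)
  obtain k where k: "r * amin \<le> Delta a (pref x (Suc k))" "Delta a (pref x (Suc k)) < r"
    using Delta_pref_scale[OF amin x(1) r] by blast
  define v where "v = pref x (Suc k)"
  have v: "set v \<subseteq> A" using set_pref_subset[OF x(1)] by (simp add: v_def)
  have "(r * amin) powr s \<le> Delta a v powr s"
    using k(1) r(1) amin(1) s by (intro powr_mono2) (auto simp: v_def)
  then have "ennreal ((r * amin) powr s) \<le> emeasure (bernoulli p) (icyl A v)"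
    unfolding p(2)[OF v] by (rule ennreal_leI)
  also have "\<dots> \<le> emeasure (bernoulli p) (quot_map -` tball X r)"
  proof (rule emeasure_mono)
    show "icyl A v \<subseteq> quot_map -` tball X r"
    proof
      fix w assume w: "w \<in> icyl A v"
      then have "rho A a x w < r" using rho_le_Delta[OF icyl_pref[OF x(1)]] k(2) by (fastforce simp: v_def)
      then show "w \<in> quot_map -` tball X r"
        using quot_map_mball_iwords[OF x(1)] w x(2) by (simp add: icyl_iff)
    qed
  qed (rule quot_map_vimage_open_sets[OF mopen_mball[OF X]])
  also have "\<dots> = emeasure (quot_measure p) (tball X r)"
    by (rule emeasure_quot_measure_mball[OF X, symmetric])
  finally show ?thesis .
qed

lemma mball_measure_upper:
  assumes p: "set_pmf p \<subseteq> A" "\<And>v. set v \<subseteq> A \<Longrightarrow> emeasure (bernoulli p) (icyl A v) = ennreal (Delta a v powr s)"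
    and fin: "finite A" and s: "0 \<le> s" and amin: "0 < amin" "amin \<le> 1" "\<forall>c\<in>A. amin \<le> a c"
    and X: "X \<in> Tcarrier A a" and r: "0 < r"
  shows "emeasure (quot_measure p) (tball X r)
    \<le> ennreal ((2 * card A + 1) * (8 * r / amin) powr s)"
proof -
  obtain x where x: "x \<in> iwords A" "X = rho_class A a x" using X by (auto simp: Tcarrier_eq_image)
  obtain V where V: "finite V" "card V \<le> 2 * card A + 1"
    "\<forall>v\<in>V. set v \<subseteq> A \<and> Delta a v \<le> 8 * r / amin"
    "{y \<in> iwords A. rho A a x y < r} \<subseteq> (\<Union>v\<in>V. icyl A v)"
    using ball_covered_by_cylinders[OF fin amin x(1) r] by blast
  have cover: "quot_map -` tball X r \<subseteq> (UNIV - iwords A) \<union> (\<Union>v\<in>V. icyl A v)"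
  proof
    fix w assume "w \<in> quot_map -` tball X r"
    then have "w \<in> iwords A \<Longrightarrow> rho A a x w < r" using quot_map_mball_iwords[OF x(1)] x(2) by simp
    then show "w \<in> (UNIV - iwords A) \<union> (\<Union>v\<in>V. icyl A v)" using V(4) by blast
  qed
  have cyls: "(\<Union>v\<in>V. icyl A v) \<in> sets (bernoulli p)" using V(1) icyl_sets by blast
  have "emeasure (quot_measure p) (tball X r)
      \<le> emeasure (bernoulli p) ((UNIV - iwords A) \<union> (\<Union>v\<in>V. icyl A v))"
    unfolding emeasure_quot_measure_mball[OF X]
    by (rule emeasure_mono[OF cover]) (use compl_iwords_sets cyls in blast)
  also have "\<dots> \<le> emeasure (bernoulli p) (UNIV - iwords A) + emeasure (bernoulli p) (\<Union>v\<in>V. icyl A v)"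
    by (rule emeasure_subadditive[OF compl_iwords_sets cyls])
  also have "\<dots> \<le> 0 + (\<Sum>v\<in>V. emeasure (bernoulli p) (icyl A v))"
    using emeasure_compl_iwords[OF p(1)] emeasure_subadditive_finite[OF V(1), of "icyl A"] icyl_sets
    by auto
  also have "\<dots> = ennreal (\<Sum>v\<in>V. Delta a v powr s)"
    using p(2) V(3) by (simp add: sum_ennreal)
  also have "\<dots> \<le> ennreal (\<Sum>v\<in>V. (8 * r / amin) powr s)"
    using V(3) s Delta_nonneg by (intro ennreal_leI sum_mono powr_mono2) auto
  also have "\<dots> \<le> ennreal ((2 * card A + 1) * (8 * r / amin) powr s)"
    using V(2) by (intro ennreal_leI) (simp add: mult_right_mono)
  finally show ?thesis .
qed

lemma min_weight:
  assumes "finite A"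
  obtains amin where "0 < amin" "amin \<le> 1" "\<forall>c\<in>A. amin \<le> a c"
proof
  have "Min (a ` A) \<in> a ` A" using assms one_in by (intro Min_in) auto
  then obtain c where c: "c \<in> A" "Min (a ` A) = a c" by auto
  show "0 < Min (a ` A)" "Min (a ` A) \<le> 1" using a_pos[OF c(1)] a_le_half[OF c(1)] c(2) by simp_all
  show "\<forall>d\<in>A. Min (a ` A) \<le> a d" using assms by (auto intro: Min_le)
qed

theorem ahlfors_regular_finite_alphabet:
  assumes fin: "finite A" and s: "0 < s" and total: "(\<Sum>i\<in>A. a i powr s) = 1"
  shows "ahlfors_regular (Tcarrier A a) (Tdist A a) s"
proof -
  have sums_1: "(\<lambda>i. if i \<in> A then a i powr s else 0) sums 1"
    using sums_If_finite_set[OF fin, of "\<lambda>i. a i powr s"] total by simp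
  obtain p where p: "set_pmf p \<subseteq> A"
    "\<And>v. set v \<subseteq> A \<Longrightarrow> emeasure (bernoulli p) (icyl A v) = ennreal (Delta a v powr s / 1 ^ length v)"
    using bernoulli_with_cylinder_measure[OF zero_less_one sums_1] by blast
  note p = p(1) p(2)[unfolded power_one div_by_1]
  obtain amin where amin: "0 < amin" "amin \<le> 1" "\<forall>c\<in>A. amin \<le> a c"
    using min_weight[OF fin] by blast
  have amin_s: "0 < amin powr s" using amin(1) by simp
  define C where "C = max (1 / amin powr s) ((2 * card A + 1) * (8 / amin) powr s) + 2"
  have "1 / amin powr s \<le> max (1 / amin powr s) ((2 * card A + 1) * (8 / amin) powr s)"
    "(2 * card A + 1) * (8 / amin) powr s \<le> max (1 / amin powr s) ((2 * card A + 1) * (8 / amin) powr s)"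
    by (rule max.cobounded1, rule max.cobounded2)
  moreover have "0 \<le> 1 / amin powr s" using amin_s by simp
  ultimately have C: "1 < C" "1 / amin powr s \<le> C" "(2 * card A + 1) * (8 / amin) powr s \<le> C"
    unfolding C_def by linarith+
  show ?thesis
    unfolding ahlfors_regular_def
  proof (intro exI[of _ "quot_measure p"] exI[of _ C] conjI ballI allI impI)
    fix X r assume X: "X \<in> Tcarrier A a" and r: "0 < r \<and> r < diam' (Tdist A a) (Tcarrier A a)"
    then have r1: "0 < r" "r \<le> 1" using diam_Tcarrier_le_1 by auto
    have "1 / C \<le> amin powr s"
      using C(1,2) amin_s by (simp add: divide_le_eq le_divide_eq mult.commute)
    then have "r powr s * (1 / C) \<le> r powr s * amin powr s" by (intro mult_left_mono) auto
    then have "r powr s / C \<le> (r * amin) powr s"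
      using r1(1) amin(1) by (simp add: powr_mult)
    then have "ennreal (r powr s / C) \<le> ennreal ((r * amin) powr s)" by (rule ennreal_leI)
    also have "\<dots> \<le> emeasure (quot_measure p) (tball X r)"
      using mball_measure_lower[OF p _ amin(1,3) X r1] s by (meson less_imp_le)
    finally show "ennreal (r powr s / C) \<le> emeasure (quot_measure p) (tball X r)" .
    have "8 * r / amin = (8 / amin) * r" by simp
    then have "(2 * card A + 1) * (8 * r / amin) powr s = (2 * card A + 1) * (8 / amin) powr s * r powr s"
      using amin(1) r1(1) by (simp only: powr_mult)
    also have "\<dots> \<le> C * r powr s" using C(3) by (intro mult_right_mono) auto
    finally have "ennreal ((2 * card A + 1) * (8 * r / amin) powr s) \<le> ennreal (C * r powr s)"
      by (rule ennreal_leI)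
    with mball_measure_upper[OF p fin _ amin X r1(1)] s
    show "emeasure (quot_measure p) (tball X r) \<le> ennreal (C * r powr s)"
      by (meson less_imp_le order_trans)
  qed (simp_all add: space_quot_measure sets_quot_measure C(1))
qed

end

section \<open>Hausdorff dimension for infinite alphabets\<close>

context weighted_alphabet
begin

lemma infinite_fwords:
  assumes "infinite A" "1 \<le> n"
  shows "infinite (fwords A n)"
proof
  assume fin: "finite (fwords A n)"
  have "inj_on (\<lambda>c. replicate (n - 1) 1 @ [c]) A" by (auto simp: inj_on_def)
  moreover have "(\<lambda>c. replicate (n - 1) 1 @ [c]) ` A \<subseteq> fwords A n"
    using assms(2) one_in by (auto simp: fwords_iff)
  then have "finite ((\<lambda>c. replicate (n - 1) 1 @ [c]) ` A)" using fin by (rule finite_subset)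
  ultimately have "finite A" using finite_imageD by blast
  with assms(1) show False ..
qed

lemma hcontrib_rho_class_icyl_le:
  assumes v: "set v \<subseteq> A" and s: "0 < s"
  shows "hcontrib (Tdist A a) s (rho_class A a ` icyl A v) \<le> ennreal (Delta a v powr s)"
proof -
  have "diam' (Tdist A a) (rho_class A a ` icyl A v) powr s \<le> Delta a v powr s"
    using diam_rho_class_icyl(2,3)[OF v] s by (intro powr_mono2) auto
  then show ?thesis using diam_rho_class_icyl(1)[OF v] s by (simp add: hcontrib_def ennreal_leI)
qed

lemma hausdorff_pre_le_level_sum:
  assumes e: "bij_betw e UNIV (fwords A n)" and s: "0 < s" and n: "(1/2::real) ^ n \<le> \<delta>"
  shows "hausdorff_pre (Tcarrier A a) (Tdist A a) s \<delta> (Tcarrier A a) \<le> (\<Sum>i. ennreal (Delta a (e i) powr s))"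
proof -
  have "e i \<in> fwords A n" for i using e by (auto simp: bij_betw_def)
  then have eA: "set (e i) \<subseteq> A" "length (e i) = n" for i by (simp_all add: fwords_iff)
  define U where "U i = rho_class A a ` icyl A (e i)" for i
  have "(\<forall>i. U i \<subseteq> Tcarrier A a \<and> diam' (Tdist A a) (U i) \<le> \<delta>) \<and> Tcarrier A a \<subseteq> (\<Union>i. U i)"
  proof (intro conjI allI)
    fix i
    show "U i \<subseteq> Tcarrier A a" by (auto simp: U_def Tcarrier_eq_image icyl_iff)
    have "diam' (Tdist A a) (U i) \<le> Delta a (e i)" using diam_rho_class_icyl(2)[OF eA(1)] by (simp add: U_def)
    also have "\<dots> \<le> (1/2) ^ n" using Delta_le_half_power[OF eA(1)] eA(2) by simp
    also have "\<dots> \<le> \<delta>" by (rule n)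
    finally show "diam' (Tdist A a) (U i) \<le> \<delta>" .
  next
    show "Tcarrier A a \<subseteq> (\<Union>i. U i)"
    proof
      fix X assume "X \<in> Tcarrier A a"
      then obtain x where x: "x \<in> iwords A" "X = rho_class A a x" by (auto simp: Tcarrier_eq_image)
      then have "pref x n \<in> fwords A n" using set_pref_subset by (simp add: fwords_iff)
      then obtain i where "e i = pref x n" using e by (metis bij_betw_iff_bijections)
      then have "X \<in> U i" using x icyl_pref[OF x(1), of n] by (simp add: U_def)
      then show "X \<in> (\<Union>i. U i)" by blast
    qed
  qed
  then have "hausdorff_pre (Tcarrier A a) (Tdist A a) s \<delta> (Tcarrier A a)
      \<le> (\<Sum>i. hcontrib (Tdist A a) s (U i))"
    unfolding hausdorff_pre_def by (intro INF_lower) blast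
  also have "\<dots> \<le> (\<Sum>i. ennreal (Delta a (e i) powr s))"
    by (intro suminf_le allI) (auto simp: U_def hcontrib_rho_class_icyl_le[OF eA(1) s])
  finally show ?thesis .
qed

text \<open>The cylinders of level n are disjoint, so the Bernoulli measure bounds the sum of their
  Delta a v powr s by L ^ n.\<close>

lemma hausdorff_pre_le_power:
  assumes inf: "infinite A" and s: "0 < s" and L: "0 < L"
    and p: "\<And>v. set v \<subseteq> A \<Longrightarrow> emeasure (bernoulli p) (icyl A v) = ennreal (Delta a v powr s / L ^ length v)"
    and n: "1 \<le> n" "(1/2::real) ^ n \<le> \<delta>"
  shows "hausdorff_pre (Tcarrier A a) (Tdist A a) s \<delta> (Tcarrier A a) \<le> ennreal (L ^ n)"
proof -
  define e where "e = from_nat_into (fwords A n)"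
  have "countable (fwords A n)" by simp
  then have e: "bij_betw e UNIV (fwords A n)"
    unfolding e_def using infinite_fwords[OF inf n(1)] by (rule bij_betw_from_nat_into)
  then have "e i \<in> fwords A n" for i by (auto simp: bij_betw_def)
  then have eA: "set (e i) \<subseteq> A" "length (e i) = n" for i by (simp_all add: fwords_iff)
  have "ennreal (Delta a (e i) powr s) = ennreal (L ^ n) * emeasure (bernoulli p) (icyl A (e i))" for i
    using p[OF eA(1)] eA(2) L by (simp add: ennreal_mult[symmetric])
  then have "hausdorff_pre (Tcarrier A a) (Tdist A a) s \<delta> (Tcarrier A a)
      \<le> (\<Sum>i. ennreal (L ^ n) * emeasure (bernoulli p) (icyl A (e i)))"
    using hausdorff_pre_le_level_sum[OF e s n(2)] by simp
  also have "\<dots> = ennreal (L ^ n) * (\<Sum>i. emeasure (bernoulli p) (icyl A (e i)))"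
    by (rule ennreal_suminf_cmult)
  also have "(\<Sum>i. emeasure (bernoulli p) (icyl A (e i))) = emeasure (bernoulli p) (\<Union>i. icyl A (e i))"
  proof (rule suminf_emeasure)
    show "disjoint_family (\<lambda>i. icyl A (e i))"
      unfolding disjoint_family_on_def
    proof (intro ballI impI)
      fix i j :: nat assume "i \<noteq> j"
      then have "e i \<noteq> e j" using e by (auto simp: bij_betw_def inj_def)
      then show "icyl A (e i) \<inter> icyl A (e j) = {}"
        using eA(2)[of i] eA(2)[of j] by (auto simp: icyl_def)
    qed
  qed (use icyl_sets in blast)
  also have "ennreal (L ^ n) * emeasure (bernoulli p) (\<Union>i. icyl A (e i)) \<le> ennreal (L ^ n) * 1"
    by (intro mult_left_mono prob_space.emeasure_le_1[OF prob_space_bernoulli]) auto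
  finally show ?thesis by simp
qed

theorem hausdorff_dim_le:
  assumes inf: "infinite A" and s: "0 < s"
    and total: "(\<lambda>i. if i \<in> A then a i powr s else 0) sums L" and L1: "L < 1"
  shows "hausdorff_dim (Tcarrier A a) (Tdist A a) \<le> ereal s"
proof -
  have L: "0 < L"
    using total a_pos[OF one_in] one_in
    by (subst sums_unique[OF total]) (intro suminf_pos2[of _ 1], auto simp: sums_summable)
  obtain p where p:
    "\<And>v. set v \<subseteq> A \<Longrightarrow> emeasure (bernoulli p) (icyl A v) = ennreal (Delta a v powr s / L ^ length v)"
    using bernoulli_with_cylinder_measure[OF L total] by blast
  have "hausdorff_pre (Tcarrier A a) (Tdist A a) s \<delta> (Tcarrier A a) = 0" if \<delta>: "0 < \<delta>" for \<delta>
  proof -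
    obtain n0 where n0: "n0 \<ge> 1" "(1/2::real) ^ n0 < \<delta>" using half_power_less[OF \<delta>] by blast
    have "\<forall>n\<ge>n0. hausdorff_pre (Tcarrier A a) (Tdist A a) s \<delta> (Tcarrier A a) \<le> ennreal (L ^ n)"
    proof (intro allI impI)
      fix n assume "n0 \<le> n"
      then have "(1/2::real) ^ n \<le> (1/2) ^ n0" by (intro power_decreasing) auto
      then have "(1/2::real) ^ n \<le> \<delta>" using n0(2) by linarith
      moreover have "1 \<le> n" using n0(1) \<open>n0 \<le> n\<close> by linarith
      ultimately show "hausdorff_pre (Tcarrier A a) (Tdist A a) s \<delta> (Tcarrier A a) \<le> ennreal (L ^ n)"
        by (intro hausdorff_pre_le_power[OF inf s L p])
    qed
    moreover have "(\<lambda>n. ennreal (L ^ n)) \<longlonglongrightarrow> ennreal 0"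
      using L L1 by (intro tendsto_ennrealI LIMSEQ_power_zero) simp
    ultimately have "hausdorff_pre (Tcarrier A a) (Tdist A a) s \<delta> (Tcarrier A a) \<le> ennreal 0"
      by (intro Lim_bounded2) auto
    then show ?thesis by simp
  qed
  then have "hausdorff_measure (Tcarrier A a) (Tdist A a) s (Tcarrier A a) = 0"
    by (simp add: hausdorff_measure_def)
  then show ?thesis unfolding hausdorff_dim_def using s by (intro Inf_lower) auto
qed

end

theorem proposition8p1:
  fixes a :: "nat \<Rightarrow> real"
  assumes "is_weight a"
  shows "(\<forall>m::nat. m \<ge> 2 \<longrightarrow>
            (\<exists>!s::real. Psi m a s = 1) \<and>
            (\<forall>s. Psi m a s = 1 \<longrightarrow>
               ahlfors_regular (Tcarrier {1..m} a) (Tdist {1..m} a) s))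
       \<and> (\<forall>s::real. s > 0 \<and> (\<exists>L. (\<lambda>m. Psi m a s) \<longlonglongrightarrow> L \<and> L < 1) \<longrightarrow>
            hausdorff_dim (Tcarrier {1..} a) (Tdist {1..} a) \<le> ereal s)"
proof (intro conjI allI impI)
  fix m :: nat assume "2 \<le> m"
  then show "\<exists>!s. Psi m a s = 1" by (rule Psi_eq_1_unique[OF assms])
next
  fix m :: nat and s :: real assume m: "2 \<le> m" and s: "Psi m a s = 1"
  interpret weighted_alphabet "{1..m}" a using assms m by unfold_locales auto
  show "ahlfors_regular (Tcarrier {1..m} a) (Tdist {1..m} a) s"
    using ahlfors_regular_finite_alphabet[OF finite_atLeastAtMost Psi_eq_1_pos[OF assms m s]] s
    by (simp add: Psi_def)
next
  fix s :: real assume "0 < s \<and> (\<exists>L. (\<lambda>m. Psi m a s) \<longlonglongrightarrow> L \<and> L < 1)"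
  then obtain L where s: "0 < s" and L: "(\<lambda>m. Psi m a s) \<longlonglongrightarrow> L" "L < 1" by blast
  interpret weighted_alphabet "{1..}" a using assms by unfold_locales auto
  show "hausdorff_dim (Tcarrier {1..} a) (Tdist {1..} a) \<le> ereal s"
    by (rule hausdorff_dim_le[OF infinite_Ici s Psi_sums[OF L(1)] L(2)])
qed

end
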